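(* Let $T$ be a lush hedge of height $2$ having two vertices of height $1$ with different numbers of children, and write $\ell_i=\ell_i(T)$. Then the unordered multiplicity list $\mathbf m=\{\ell_1+\ell_3,\ell_2,\ell_2,1,1\}$ is realizable in $\mathcal S(T)$, but no matrix in $\mathcal S(T)$ all of whose off-diagonal entries lie in $\{0,1\}$ has unordered multiplicity list $\mathbf m$.
   Context: Hedges: a rooted tree has a distinguished root; $y$ is a child of adjacent $z$ if the root-to-$y$ path passes through $z$; a leaf is a non-root vertex of degree 1. A hedge is a rooted tree in which all leaves are at equal distance from the root. Height of a vertex: distance to a nearest leaf; height of the hedge: that of the root. $V_i(T)$ is the set of vertices of height $i$; $\ell_i(T)=|V_{i-1}(T)|-|V_i(T)|$ for $i\ge1$ (so here $\ell_3=1$). A hedge is lush if every vertex of height $\ge2$ has at least three children and every vertex of height $1$ at least two. $\mathcal S(T)$ is the set of real symmetric matrices indexed by $V(T)$ with $a_{ij}\ne0$ iff $\{i,j\}\in E(T)$ for $i\ne j$, diagonal arbitrary. An unordered multiplicity list is realizable in $\mathcal S(T)$ if some $A\in\mathcal S(T)$ has distinct eigenvalues with exactly those multiplicities. *)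

theory Defs
  imports "HOL-Analysis.Analysis" "HOL-Computational_Algebra.Polynomial" "HOL-Library.Multiset"
begin

definition graph_edges :: "('n \<Rightarrow> 'n \<Rightarrow> bool) \<Rightarrow> 'n set set" where
  "graph_edges E = {{u, v} | u v. E u v}"

definition is_tree :: "('n::finite \<Rightarrow> 'n \<Rightarrow> bool) \<Rightarrow> bool" where
  "is_tree E \<longleftrightarrow> (\<forall>u v. E u v \<longrightarrow> E v u) \<and> (\<forall>u. \<not> E u u)
     \<and> (\<forall>u v. E\<^sup>*\<^sup>* u v) \<and> card (graph_edges E) = CARD('n) - 1"

definition tdist :: "('n \<Rightarrow> 'n \<Rightarrow> bool) \<Rightarrow> 'n \<Rightarrow> 'n \<Rightarrow> nat" where
  "tdist E u v = (LEAST k. (E ^^ k) u v)"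

definition degree :: "('n \<Rightarrow> 'n \<Rightarrow> bool) \<Rightarrow> 'n \<Rightarrow> nat" where
  "degree E v = card {w. E v w}"

definition leaves :: "('n \<Rightarrow> 'n \<Rightarrow> bool) \<Rightarrow> 'n \<Rightarrow> 'n set" where
  "leaves E r = {v. v \<noteq> r \<and> degree E v = 1}"

definition children :: "('n \<Rightarrow> 'n \<Rightarrow> bool) \<Rightarrow> 'n \<Rightarrow> 'n \<Rightarrow> 'n set" where
  "children E r z = {y. E z y \<and> tdist E r y = tdist E r z + 1}"

definition is_hedge :: "('n::finite \<Rightarrow> 'n \<Rightarrow> bool) \<Rightarrow> 'n \<Rightarrow> bool" where
  "is_hedge E r \<longleftrightarrow> is_tree E \<and>
     (\<forall>l1 \<in> leaves E r. \<forall>l2 \<in> leaves E r. tdist E r l1 = tdist E r l2)"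

definition vheight :: "('n \<Rightarrow> 'n \<Rightarrow> bool) \<Rightarrow> 'n \<Rightarrow> 'n \<Rightarrow> nat" where
  "vheight E r v = (LEAST k. \<exists>l \<in> leaves E r. tdist E v l = k)"

definition hedge_height :: "('n \<Rightarrow> 'n \<Rightarrow> bool) \<Rightarrow> 'n \<Rightarrow> nat" where
  "hedge_height E r = vheight E r r"

definition level_set :: "('n \<Rightarrow> 'n \<Rightarrow> bool) \<Rightarrow> 'n \<Rightarrow> nat \<Rightarrow> 'n set" where
  "level_set E r i = {v. vheight E r v = i}"

definition ell :: "('n \<Rightarrow> 'n \<Rightarrow> bool) \<Rightarrow> 'n \<Rightarrow> nat \<Rightarrow> int" where
  "ell E r i = int (card (level_set E r (i - 1))) - int (card (level_set E r i))"

definition lush :: "('n::finite \<Rightarrow> 'n \<Rightarrow> bool) \<Rightarrow> 'n \<Rightarrow> bool" where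
  "lush E r \<longleftrightarrow> is_hedge E r \<and>
     (\<forall>v. vheight E r v \<ge> 2 \<longrightarrow> card (children E r v) \<ge> 3) \<and>
     (\<forall>v. vheight E r v = 1 \<longrightarrow> card (children E r v) \<ge> 2)"

definition S_T :: "('n::finite \<Rightarrow> 'n \<Rightarrow> bool) \<Rightarrow> (real^'n^'n) set" where
  "S_T E = {A. transpose A = A \<and> (\<forall>i j. i \<noteq> j \<longrightarrow> (A $ i $ j \<noteq> 0 \<longleftrightarrow> E i j))}"

definition charpoly :: "real^'n^'n \<Rightarrow> real poly" where
  "charpoly A = det (\<chi> i j. (if i = j then [:- (A $ i $ j), 1:] else [:- (A $ i $ j):]))"

text \<open>Unordered multiplicity list: multiset of (algebraic) multiplicities of the distinct
  eigenvalues (all eigenvalues of a real symmetric matrix are real).\<close>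
definition mult_list :: "real^'n^'n \<Rightarrow> nat multiset" where
  "mult_list A = image_mset (\<lambda>x. order x (charpoly A)) (mset_set {x. poly (charpoly A) x = 0})"

end

theory Submission
  imports Defs
begin

text \<open>Let V be the set of height-one vertices of the hedge (k = |V| \<ge> 3), L its n leaves and c_v
  the number of leaves below v. Eliminating first the leaves and then V expresses the
  characteristic polynomial of A \<in> S(T) through the branch pivots
  D_v(t) = t - a_v - \<Sum>_{l below v} a_{vl}^2 / (t - a_l). With zero diagonal and weights 1/\<surd>c_v
  on the leaf edges every D_v equals t - 1/t, and the characteristic polynomial becomes
  t^(n-k+1) (t^2 - 1)^(k-1) (t^2 - k - 1), which realises the list.

  If all edge entries are 1, a local analysis of this factorisation at the eigenvalue lam of
  multiplicity n - k + 1 shows that lam is the diagonal entry of every leaf and of the root. Then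
  every eigenvalue mu \<noteq> lam of multiplicity k - 1 \<ge> 2 satisfies (mu - a_v) (mu - lam) = c_v for
  all v \<in> V; two such eigenvalues mu, nu force c_v = (lam - nu) (mu - lam) for every v, so all
  height-one vertices would have the same number of children.\<close>

section \<open>Triangular determinants and orders of zeros\<close>

definition char_matrix :: "real^'n::finite^'n \<Rightarrow> real \<Rightarrow> real^'n^'n" where
  "char_matrix A t = (\<chi> i j. if i = j then t - A$i$j else - A$i$j)"

lemma char_matrix_nth: "char_matrix A t $ i $ j = (if i = j then t - A$i$i else - A$i$j)"
  unfolding char_matrix_def by simp

lemma poly_charpoly: "poly (charpoly A) t = det (char_matrix A t)"
  unfolding charpoly_def char_matrix_def det_def
  by (auto simp: poly_sum poly_prod intro!: sum.cong arg_cong2[where f="(*)"] prod.cong)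

lemma permutes_moves_some_point_up:
  fixes h :: "'n::finite \<Rightarrow> nat"
  assumes p: "p permutes (UNIV::'n set)" and "p \<noteq> id"
  shows "\<exists>i. p i \<noteq> i \<and> h i \<le> h (p i)"
proof (rule ccontr)
  assume "\<not> ?thesis"
  hence lt: "\<And>i. p i \<noteq> i \<Longrightarrow> h (p i) < h i" by (meson not_le)
  obtain i0 where i0: "p i0 \<noteq> i0" using \<open>p \<noteq> id\<close> by (metis eq_id_iff)
  have "(\<Sum>i\<in>UNIV. h (p i)) < (\<Sum>i\<in>UNIV. h i)"
    by (rule sum_strict_mono_ex1) (auto intro: lt i0 less_imp_le dest: lt simp: le_less, metis lt i0)
  moreover have "(\<Sum>i\<in>UNIV. h (p i)) = (\<Sum>i\<in>UNIV. h i)"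
    using sum.permute[OF p, of h] by (simp add: comp_def)
  ultimately show False by simp
qed

lemma det_triangular_wrt_rank:
  fixes Y :: "'a::comm_ring_1^'n::finite^'n" and h :: "'n \<Rightarrow> nat"
  assumes "\<And>i j. i \<noteq> j \<Longrightarrow> h i \<le> h j \<Longrightarrow> Y$i$j = 0"
  shows "det Y = (\<Prod>i\<in>UNIV. Y$i$i)"
proof -
  have "of_int (sign p) * (\<Prod>i\<in>UNIV. Y$i$p i) = 0" if p: "p permutes UNIV" "p \<noteq> id" for p
  proof -
    obtain i where "p i \<noteq> i" "h i \<le> h (p i)" using permutes_moves_some_point_up[OF p] by blast
    hence "Y$i$p i = 0" using assms by metis
    hence "(\<Prod>i\<in>UNIV. Y$i$p i) = 0" by (meson finite prod_zero UNIV_I)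
    thus ?thesis by simp
  qed
  hence "det Y = (\<Sum>p\<in>{id}. of_int (sign p) * (\<Prod>i\<in>UNIV. Y$i$p i))"
    unfolding det_def by (intro sum.mono_neutral_right) (auto simp: permutes_id)
  thus ?thesis by (simp add: sign_id)
qed

definition row_eliminate :: "('n \<Rightarrow> 'n set) \<Rightarrow> real^'n::finite^'n \<Rightarrow> real^'n^'n" where
  "row_eliminate S M = (\<chi> i j. M$i$j - (\<Sum>k\<in>S i. M$i$k / M$k$k * M$k$j))"

lemma row_eliminate_nth: "row_eliminate S M $ i $ j = M$i$j - (\<Sum>k\<in>S i. M$i$k / M$k$k * M$k$j)"
  unfolding row_eliminate_def by simp

lemma det_row_eliminate:
  fixes h :: "'n::finite \<Rightarrow> nat"
  assumes "\<And>i k. k \<in> S i \<Longrightarrow> h i < h k"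
  shows "det (row_eliminate S M) = det M"
proof -
  define R :: "real^'n^'n" where
    "R = (\<chi> i k. if i = k then 1 else if k \<in> S i then - M$i$k / M$k$k else 0)"
  have "(R ** M)$i$j = row_eliminate S M $ i $ j" for i j
  proof -
    have "i \<notin> S i" using assms by blast
    hence "(R ** M)$i$j = (\<Sum>k\<in>UNIV. (if k = i then M$i$j else 0)
        + (if k \<in> S i then - (M$i$k / M$k$k * M$k$j) else 0))"
      unfolding matrix_matrix_mult_def R_def by (auto intro!: sum.cong)
    thus ?thesis by (simp add: sum.distrib sum.If_cases sum_negf row_eliminate_nth)
  qed
  hence "row_eliminate S M = R ** M" by (simp add: vec_eq_iff)
  moreover have "det R = 1"
  proof -
    have "det R = (\<Prod>i\<in>UNIV. R$i$i)"
    proof (rule det_triangular_wrt_rank[where h = "\<lambda>i. Max (range h) - h i"])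
      fix i j assume "i \<noteq> j" and le: "Max (range h) - h i \<le> Max (range h) - h j"
      have "h j \<le> Max (range h)" by simp
      moreover have "j \<in> S i \<Longrightarrow> h i < h j" by (rule assms)
      ultimately have "j \<notin> S i" using le by arith
      thus "R$i$j = 0" using \<open>i \<noteq> j\<close> by (simp add: R_def)
    qed
    thus ?thesis by (simp add: R_def)
  qed
  ultimately show ?thesis by (simp add: det_mul)
qed

lemma exponent_le_of_eventually_eq:
  fixes u w :: "real \<Rightarrow> real"
  assumes ev: "eventually (\<lambda>t. (t - c)^m * u t = (t - c)^n * w t) (at c)"
    and u: "(u \<longlongrightarrow> U) (at c)" and "U \<noteq> 0" and w: "(w \<longlongrightarrow> W) (at c)"
  shows "n \<le> m"
proof (rule ccontr)
  assume "\<not> n \<le> m"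
  have "eventually (\<lambda>t. t \<noteq> c) (at c)" by (simp add: eventually_at_filter)
  with ev have "eventually (\<lambda>t. (t - c)^(n - m) * w t = u t) (at c)"
  proof eventually_elim
    case (elim t)
    have "(t - c)^n = (t - c)^m * (t - c)^(n - m)" using \<open>\<not> n \<le> m\<close> by (simp flip: power_add)
    with elim show ?case by (simp add: mult.assoc)
  qed
  moreover have "((\<lambda>t. (t - c)^(n - m) * w t) \<longlongrightarrow> (c - c)^(n - m) * W) (at c)"
    by (intro tendsto_intros w)
  ultimately have "(u \<longlongrightarrow> 0) (at c)" using \<open>\<not> n \<le> m\<close> by (simp add: tendsto_cong zero_power)
  with u \<open>U \<noteq> 0\<close> show False using tendsto_unique[OF at_neq_bot] by metis
qed

lemma order_eq_of_eventually_factor: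
  fixes p :: "real poly"
  assumes ev: "eventually (\<lambda>t. poly p t = (t - c)^e * g t) (at c)"
    and g: "(g \<longlongrightarrow> L) (at c)" and "L \<noteq> 0"
  shows "order c p = e"
proof -
  have "p \<noteq> 0"
  proof
    assume "p = 0"
    have "eventually (\<lambda>t. t \<noteq> c) (at c)" by (simp add: eventually_at_filter)
    with ev have "eventually (\<lambda>t. g t = 0) (at c)" by eventually_elim (simp add: \<open>p = 0\<close>)
    hence "(g \<longlongrightarrow> 0) (at c)" by (rule tendsto_eventually)
    with g \<open>L \<noteq> 0\<close> show False using tendsto_unique[OF at_neq_bot] by metis
  qed
  obtain q where pq: "p = [:-c,1:]^order c p * q" and "\<not> [:-c,1:] dvd q"
    using order_decomp[OF \<open>p \<noteq> 0\<close>] by blast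
  hence "poly q c \<noteq> 0" by (simp add: poly_eq_0_iff_dvd)
  have q: "(poly q \<longlongrightarrow> poly q c) (at c)" by (simp add: isCont_def[symmetric])
  have "eventually (\<lambda>t. (t - c)^order c p * poly q t = (t - c)^e * g t) (at c)"
    using ev by eventually_elim (subst (asm) pq, simp add: poly_power)
  moreover from this have "eventually (\<lambda>t. (t - c)^e * g t = (t - c)^order c p * poly q t) (at c)"
    by (simp add: eq_commute)
  ultimately show ?thesis
    using exponent_le_of_eventually_eq[OF _ q \<open>poly q c \<noteq> 0\<close> g]
      exponent_le_of_eventually_eq[OF _ g \<open>L \<noteq> 0\<close> q] by (meson antisym)
qed

lemma order_eq_of_eventually_factor':
  fixes p :: "real poly"
  assumes ev: "eventually (\<lambda>t. poly p t * (t - c)^a = (t - c)^b * g t) (at c)"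
    and "(g \<longlongrightarrow> L) (at c)" and "L \<noteq> 0" and "a \<le> b"
  shows "order c p = b - a"
proof (rule order_eq_of_eventually_factor[OF _ assms(2,3)])
  have "eventually (\<lambda>t. t \<noteq> c) (at c)" by (simp add: eventually_at_filter)
  with ev show "eventually (\<lambda>t. poly p t = (t - c)^(b - a) * g t) (at c)"
  proof eventually_elim
    case (elim t)
    have "(t - c)^b = (t - c)^(b-a) * (t-c)^a" using \<open>a \<le> b\<close> by (simp add: power_add[symmetric])
    with elim show ?case by (simp add: ac_simps)
  qed
qed

lemma poly_eqI_on_ray:
  fixes p q :: "real poly"
  assumes "\<And>t. t > T \<Longrightarrow> poly p t = poly q t"
  shows "p = q"
proof (rule ccontr)
  assume "p \<noteq> q"
  hence "finite {x. poly (p - q) x = 0}" by (intro poly_roots_finite) simp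
  moreover have "{T<..} \<subseteq> {x. poly (p - q) x = 0}" using assms by auto
  ultimately show False using infinite_Ioi finite_subset by blast
qed

lemma order_linear_power: "order a ([:-b, 1:]^n) = (if a = b then n else 0)"
  by (auto simp: order_power_n_n poly_power intro!: order_0I)


section \<open>Trees of depth two\<close>

locale depth_two_tree =
  fixes E :: "'n::finite \<Rightarrow> 'n \<Rightarrow> bool" and r :: 'n and V :: "'n set" and par :: "'n \<Rightarrow> 'n"
  assumes root_notin_V: "r \<notin> V"
    and par_in_V: "\<And>l. l \<notin> V \<Longrightarrow> l \<noteq> r \<Longrightarrow> par l \<in> V"
    and edge_iff: "\<And>i j. i \<noteq> j \<Longrightarrow> E i j \<longleftrightarrow> (i = r \<and> j \<in> V) \<or> (j = r \<and> i \<in> V)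
        \<or> (i \<notin> V \<and> i \<noteq> r \<and> j = par i) \<or> (j \<notin> V \<and> j \<noteq> r \<and> i = par j)"
begin

definition L :: "'n set" where "L = {l. l \<notin> V \<and> l \<noteq> r}"

definition ch :: "'n \<Rightarrow> 'n set" where "ch v = {l \<in> L. par l = v}"

lemma par_leaf_in_V: "l \<in> L \<Longrightarrow> par l \<in> V"
  using par_in_V unfolding L_def by auto

lemma root_notin_L: "r \<notin> L" and V_disjoint_L: "v \<in> V \<Longrightarrow> v \<notin> L"
  unfolding L_def by auto

lemma vertex_cases: "x = r \<or> x \<in> V \<or> x \<in> L"
  unfolding L_def by auto

lemma ch_subset_L: "ch v \<subseteq> L"
  unfolding ch_def by auto

lemma leaf_in_ch_par: "l \<in> L \<Longrightarrow> l \<in> ch (par l)"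
  unfolding ch_def by simp

lemma card_L_eq_sum_card_ch: "card L = (\<Sum>v\<in>V. card (ch v))"
proof -
  have "L = (\<Union>v\<in>V. ch v)" unfolding ch_def using par_leaf_in_V by auto
  moreover have "card (\<Union>v\<in>V. ch v) = (\<Sum>v\<in>V. card (ch v))"
    by (rule card_UN_disjoint) (auto simp: ch_def)
  ultimately show ?thesis by simp
qed

lemma not_edge_leaf_leaf: "l \<in> L \<Longrightarrow> l' \<in> L \<Longrightarrow> l \<noteq> l' \<Longrightarrow> \<not> E l l'"
  using edge_iff[of l l'] par_leaf_in_V V_disjoint_L by (auto simp: L_def)

lemma not_edge_leaf_root: "l \<in> L \<Longrightarrow> \<not> E l r"
  using edge_iff[of l r] par_leaf_in_V root_notin_V by (auto simp: L_def)

lemma not_edge_V_V: "v \<in> V \<Longrightarrow> v' \<in> V \<Longrightarrow> v \<noteq> v' \<Longrightarrow> \<not> E v v'"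
  using edge_iff[of v v'] root_notin_V by auto

lemma not_edge_leaf_V: "l \<in> L \<Longrightarrow> v \<in> V \<Longrightarrow> par l \<noteq> v \<Longrightarrow> \<not> E l v \<and> \<not> E v l"
  using edge_iff[of l v] edge_iff[of v l] root_notin_V V_disjoint_L by (auto simp: L_def)

lemma edge_root_V: "v \<in> V \<Longrightarrow> E r v \<and> E v r"
  using edge_iff[of r v] edge_iff[of v r] root_notin_V by auto

lemma edge_leaf_par: "l \<in> L \<Longrightarrow> E l (par l) \<and> E (par l) l"
proof -
  assume l: "l \<in> L"
  hence "par l \<noteq> l" using par_leaf_in_V V_disjoint_L by metis
  thus ?thesis using l edge_iff[of l "par l"] edge_iff[of "par l" l] by (auto simp: L_def)
qed

lemma edge_sym: "i \<noteq> j \<Longrightarrow> E i j \<longleftrightarrow> E j i"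
  using edge_iff[of i j] edge_iff[of j i] by auto

lemma S_T_sym: "A \<in> S_T E \<Longrightarrow> A$i$j = A$j$i"
  unfolding S_T_def by (metis (mono_tags, lifting) mem_Collect_eq transpose_def vec_lambda_beta)

lemma S_T_zero: "A \<in> S_T E \<Longrightarrow> i \<noteq> j \<Longrightarrow> \<not> E i j \<Longrightarrow> A$i$j = 0"
  unfolding S_T_def by auto

text \<open>The pivot left at v \<in> V after the leaves below v have been eliminated from t I - A.\<close>

definition schur_branch :: "real^'n^'n \<Rightarrow> real \<Rightarrow> 'n \<Rightarrow> real" where
  "schur_branch A t v = t - A$v$v - (\<Sum>l\<in>ch v. (A$v$l)^2 / (t - A$l$l))"

text \<open>Leaves are eliminated first, then the vertices of V.\<close>

definition level :: "'n \<Rightarrow> nat" where "level x = (if x = r then 0 else if x \<in> V then 1 else 2)"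

lemma level_L: "l \<in> L \<Longrightarrow> level l = 2" and level_V: "v \<in> V \<Longrightarrow> level v = 1"
  using root_notin_L root_notin_V V_disjoint_L unfolding level_def by auto

definition leaf_eliminated :: "real^'n^'n \<Rightarrow> real \<Rightarrow> real^'n^'n" where
  "leaf_eliminated A t = row_eliminate ch (char_matrix A t)"

definition branch_eliminated :: "real^'n^'n \<Rightarrow> real \<Rightarrow> real^'n^'n" where
  "branch_eliminated A t = row_eliminate (\<lambda>i. if i = r then V else {}) (leaf_eliminated A t)"

lemma det_branch_eliminated: "det (branch_eliminated A t) = det (char_matrix A t)"
proof -
  have "det (leaf_eliminated A t) = det (char_matrix A t)"
    unfolding leaf_eliminated_def
  proof (rule det_row_eliminate)
    fix i k assume "k \<in> ch i"
    hence "k \<in> L" "i \<in> V" using par_leaf_in_V unfolding ch_def by auto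
    thus "level i < level k" using level_L level_V by simp
  qed
  moreover have "det (branch_eliminated A t) = det (leaf_eliminated A t)"
    unfolding branch_eliminated_def
    by (rule det_row_eliminate[where h = level]) (use root_notin_V in \<open>auto simp: level_def split: if_splits\<close>)
  ultimately show ?thesis by simp
qed

context
  fixes A :: "real^'n^'n" and t :: real
  assumes A: "A \<in> S_T E" and leaf: "\<And>l. l \<in> L \<Longrightarrow> t \<noteq> A$l$l"
begin

lemma char_matrix_non_edge: "i \<noteq> j \<Longrightarrow> \<not> E i j \<Longrightarrow> char_matrix A t $ i $ j = 0"
  using S_T_zero[OF A] by (simp add: char_matrix_nth)

lemma leaf_eliminated_nth:
  "leaf_eliminated A t $ i $ j = char_matrix A t $ i $ j
     - (\<Sum>k\<in>ch i. char_matrix A t $ i $ k / char_matrix A t $ k $ k * char_matrix A t $ k $ j)"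
  unfolding leaf_eliminated_def row_eliminate_nth ..

lemma leaf_eliminated_outside_V: "i \<notin> V \<Longrightarrow> leaf_eliminated A t $ i $ j = char_matrix A t $ i $ j"
proof -
  assume "i \<notin> V"
  hence "ch i = {}" using par_leaf_in_V unfolding ch_def by auto
  thus ?thesis by (simp add: leaf_eliminated_nth)
qed

lemma leaf_eliminated_diag: "v \<in> V \<Longrightarrow> leaf_eliminated A t $ v $ v = schur_branch A t v"
proof -
  assume v: "v \<in> V"
  have "(\<Sum>l\<in>ch v. char_matrix A t $ v $ l / char_matrix A t $ l $ l * char_matrix A t $ l $ v)
      = (\<Sum>l\<in>ch v. (A$v$l)^2 / (t - A$l$l))"
  proof (rule sum.cong[OF refl])
    fix l assume "l \<in> ch v"
    hence "l \<noteq> v" using ch_subset_L V_disjoint_L[OF v] by blast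
    thus "char_matrix A t $ v $ l / char_matrix A t $ l $ l * char_matrix A t $ l $ v = (A$v$l)^2 / (t - A$l$l)"
      by (simp add: char_matrix_nth S_T_sym[OF A, of l v] power2_eq_square)
  qed
  thus ?thesis unfolding leaf_eliminated_nth schur_branch_def by (simp add: char_matrix_nth)
qed

lemma leaf_eliminated_V_L: "v \<in> V \<Longrightarrow> j \<in> L \<Longrightarrow> leaf_eliminated A t $ v $ j = 0"
proof -
  assume v: "v \<in> V" and j: "j \<in> L"
  have "char_matrix A t $ v $ k / char_matrix A t $ k $ k * char_matrix A t $ k $ j
      = (if k = j then char_matrix A t $ v $ j else 0)" if "k \<in> ch v" for k
  proof (cases "k = j")
    case True thus ?thesis using leaf[OF j] by (simp add: char_matrix_nth)
  next
    case False
    hence "\<not> E k j" using not_edge_leaf_leaf that ch_subset_L j by blast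
    thus ?thesis using char_matrix_non_edge False by simp
  qed
  hence "leaf_eliminated A t $ v $ j = char_matrix A t $ v $ j - (if j \<in> ch v then char_matrix A t $ v $ j else 0)"
    by (simp add: leaf_eliminated_nth)
  moreover have "char_matrix A t $ v $ j = 0" if "j \<notin> ch v"
  proof -
    have "par j \<noteq> v" "v \<noteq> j" using that j V_disjoint_L[OF v] unfolding ch_def by auto
    thus ?thesis using char_matrix_non_edge not_edge_leaf_V[OF j v] by blast
  qed
  ultimately show ?thesis by auto
qed

lemma leaf_eliminated_V_V: "v \<in> V \<Longrightarrow> j \<in> V \<Longrightarrow> j \<noteq> v \<Longrightarrow> leaf_eliminated A t $ v $ j = 0"
proof -
  assume v: "v \<in> V" and j: "j \<in> V" and "j \<noteq> v"
  have "char_matrix A t $ k $ j = 0" if "k \<in> ch v" for k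
  proof -
    have "k \<in> L" "par k \<noteq> j" "k \<noteq> j" using that \<open>j \<noteq> v\<close> V_disjoint_L[OF j] unfolding ch_def by auto
    thus ?thesis using char_matrix_non_edge not_edge_leaf_V[OF _ j] by blast
  qed
  moreover have "char_matrix A t $ v $ j = 0"
    using char_matrix_non_edge not_edge_V_V[OF v j] \<open>j \<noteq> v\<close> by metis
  ultimately show ?thesis by (simp add: leaf_eliminated_nth)
qed

lemma leaf_eliminated_V_root: "v \<in> V \<Longrightarrow> leaf_eliminated A t $ v $ r = char_matrix A t $ v $ r"
proof -
  have "char_matrix A t $ k $ r = 0" if "k \<in> ch v" for k
  proof -
    have "k \<in> L" using that ch_subset_L by blast
    hence "k \<noteq> r" "\<not> E k r" using root_notin_L not_edge_leaf_root by auto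
    thus ?thesis using char_matrix_non_edge by blast
  qed
  thus ?thesis by (simp add: leaf_eliminated_nth)
qed

lemma branch_eliminated_nth:
  "branch_eliminated A t $ i $ j = leaf_eliminated A t $ i $ j
     - (\<Sum>k\<in>(if i = r then V else {}). leaf_eliminated A t $ i $ k / leaf_eliminated A t $ k $ k
          * leaf_eliminated A t $ k $ j)"
  unfolding branch_eliminated_def row_eliminate_nth ..

lemma branch_eliminated_non_root: "i \<noteq> r \<Longrightarrow> branch_eliminated A t $ i $ j = leaf_eliminated A t $ i $ j"
  by (simp add: branch_eliminated_nth)

lemma branch_eliminated_root:
  "branch_eliminated A t $ r $ r = t - A$r$r - (\<Sum>v\<in>V. (A$r$v)^2 / schur_branch A t v)"
proof -
  have "leaf_eliminated A t $ r $ v / leaf_eliminated A t $ v $ v * leaf_eliminated A t $ v $ r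
      = (A$r$v)^2 / schur_branch A t v" if v: "v \<in> V" for v
  proof -
    have "v \<noteq> r" using v root_notin_V by blast
    thus ?thesis using v
      by (simp add: leaf_eliminated_outside_V[OF root_notin_V] leaf_eliminated_diag leaf_eliminated_V_root
          char_matrix_nth S_T_sym[OF A, of v r] power2_eq_square)
  qed
  thus ?thesis
    by (simp add: branch_eliminated_nth leaf_eliminated_outside_V[OF root_notin_V] char_matrix_nth)
qed

lemma branch_eliminated_root_row:
  assumes "j \<noteq> r" and branch: "\<And>v. v \<in> V \<Longrightarrow> schur_branch A t v \<noteq> 0"
  shows "branch_eliminated A t $ r $ j = 0"
proof -
  consider "j \<in> V" | "j \<in> L" using vertex_cases \<open>j \<noteq> r\<close> by blast
  thus ?thesis
  proof cases
    case 1
    have "leaf_eliminated A t $ r $ k / leaf_eliminated A t $ k $ k * leaf_eliminated A t $ k $ j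
        = (if k = j then leaf_eliminated A t $ r $ j else 0)" if "k \<in> V" for k
      using that 1 leaf_eliminated_V_V[OF that 1] leaf_eliminated_diag branch by auto
    thus ?thesis using 1 root_notin_V by (simp add: branch_eliminated_nth)
  next
    case 2
    have "\<not> E r j" using not_edge_leaf_root[OF 2] edge_sym \<open>j \<noteq> r\<close> by blast
    hence "leaf_eliminated A t $ r $ j = 0"
      using char_matrix_non_edge \<open>j \<noteq> r\<close> leaf_eliminated_outside_V[OF root_notin_V] by metis
    thus ?thesis using leaf_eliminated_V_L[OF _ 2] by (simp add: branch_eliminated_nth)
  qed
qed

lemma poly_charpoly_eq_schur:
  assumes branch: "\<And>v. v \<in> V \<Longrightarrow> schur_branch A t v \<noteq> 0"
  shows "poly (charpoly A) t = (\<Prod>l\<in>L. t - A$l$l) * (\<Prod>v\<in>V. schur_branch A t v)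
           * (t - A$r$r - (\<Sum>v\<in>V. (A$r$v)^2 / schur_branch A t v))"
proof -
  let ?M = "branch_eliminated A t"
  have "det ?M = (\<Prod>i\<in>UNIV. ?M$i$i)"
  proof (rule det_triangular_wrt_rank[where h = level])
    fix i j assume "i \<noteq> j" and "level i \<le> level j"
    consider "i = r" | "i \<in> V" | "i \<in> L" using vertex_cases by blast
    thus "?M$i$j = 0"
    proof cases
      case 1 thus ?thesis using branch_eliminated_root_row branch \<open>i \<noteq> j\<close> by auto
    next
      case 2
      hence "i \<noteq> r" using root_notin_V by blast
      have "j \<in> V \<or> j \<in> L" using 2 \<open>level i \<le> level j\<close> vertex_cases[of j] level_V by (auto simp: level_def)
      thus ?thesis using branch_eliminated_non_root[OF \<open>i \<noteq> r\<close>] leaf_eliminated_V_V[OF 2]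
        leaf_eliminated_V_L[OF 2] \<open>i \<noteq> j\<close> by auto
    next
      case 3
      hence "i \<noteq> r" "i \<notin> V" using root_notin_L V_disjoint_L by blast+
      have "j \<in> L" using 3 \<open>level i \<le> level j\<close> vertex_cases[of j] level_L level_V by (auto simp: level_def)
      hence "char_matrix A t $ i $ j = 0"
        using char_matrix_non_edge not_edge_leaf_leaf[OF 3 _ \<open>i \<noteq> j\<close>] \<open>i \<noteq> j\<close> by blast
      thus ?thesis using branch_eliminated_non_root[OF \<open>i \<noteq> r\<close>] leaf_eliminated_outside_V[OF \<open>i \<notin> V\<close>]
        by simp
    qed
  qed
  also have "\<dots> = ?M$r$r * ((\<Prod>v\<in>V. ?M$v$v) * (\<Prod>l\<in>L. ?M$l$l))"
  proof -
    have U: "(UNIV::'n set) = insert r (V \<union> L)" using vertex_cases by auto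
    have "(\<Prod>i\<in>V \<union> L. ?M$i$i) = (\<Prod>v\<in>V. ?M$v$v) * (\<Prod>l\<in>L. ?M$l$l)"
      using V_disjoint_L by (intro prod.union_disjoint) auto
    thus ?thesis unfolding U using root_notin_V root_notin_L by simp
  qed
  also have "(\<Prod>v\<in>V. ?M$v$v) = (\<Prod>v\<in>V. schur_branch A t v)"
    using root_notin_V by (intro prod.cong) (metis branch_eliminated_non_root leaf_eliminated_diag)+
  also have "(\<Prod>l\<in>L. ?M$l$l) = (\<Prod>l\<in>L. t - A$l$l)"
    using root_notin_L V_disjoint_L
    by (intro prod.cong) (metis branch_eliminated_non_root leaf_eliminated_outside_V char_matrix_nth)+
  finally show ?thesis
    unfolding poly_charpoly det_branch_eliminated[symmetric] branch_eliminated_root by (simp add: mult_ac)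
qed

end

end


section \<open>A realisation\<close>

context depth_two_tree
begin

text \<open>With weight 1/\<surd>|ch v| on the edges below v every branch pivot equals t - 1/t,
  whatever the number of leaves of the branch.\<close>

definition leaf_weight :: "'n \<Rightarrow> real" where "leaf_weight l = 1 / sqrt (card (ch (par l)))"

definition edge_weight :: "'n \<Rightarrow> 'n \<Rightarrow> real" where
  "edge_weight i j = (if i \<in> L then leaf_weight i else if j \<in> L then leaf_weight j else 1)"

definition balanced_matrix :: "real^'n^'n" where
  "balanced_matrix = (\<chi> i j. if i \<noteq> j \<and> E i j then edge_weight i j else 0)"

lemma edge_weight_pos: "edge_weight i j > 0"
proof -
  have "card (ch (par l)) > 0" if "l \<in> L" for l
    using leaf_in_ch_par[OF that] by (metis card_gt_0_iff empty_iff finite)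
  thus ?thesis unfolding edge_weight_def leaf_weight_def by auto
qed

lemma balanced_matrix_in_S_T: "balanced_matrix \<in> S_T E"
proof -
  have "edge_weight i j = edge_weight j i" if "i \<noteq> j" "E i j" for i j
    using that not_edge_leaf_leaf unfolding edge_weight_def by auto
  hence "balanced_matrix$j$i = balanced_matrix$i$j" for i j
    unfolding balanced_matrix_def using edge_sym[of i j] by (cases "i = j") auto
  hence "transpose balanced_matrix = balanced_matrix" by (simp add: vec_eq_iff transpose_def)
  moreover have "balanced_matrix$i$j \<noteq> 0 \<longleftrightarrow> E i j" if "i \<noteq> j" for i j
    unfolding balanced_matrix_def using that edge_weight_pos[of i j] by auto
  ultimately show ?thesis unfolding S_T_def by auto
qed

lemma balanced_matrix_diag: "balanced_matrix$i$i = 0"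
  unfolding balanced_matrix_def by auto

lemma balanced_matrix_root: "v \<in> V \<Longrightarrow> balanced_matrix$r$v = 1"
  unfolding balanced_matrix_def edge_weight_def using edge_root_V root_notin_V root_notin_L V_disjoint_L
  by auto

lemma schur_branch_balanced_matrix:
  assumes v: "v \<in> V" and "t > 0" and "ch v \<noteq> {}"
  shows "schur_branch balanced_matrix t v = t - 1 / t"
proof -
  have "(balanced_matrix$v$l)^2 = 1 / card (ch v)" if l: "l \<in> ch v" for l
  proof -
    have "l \<in> L" "par l = v" using l ch_subset_L unfolding ch_def by auto
    moreover have "v \<noteq> l" using \<open>l \<in> L\<close> V_disjoint_L[OF v] by blast
    ultimately have "balanced_matrix$v$l = leaf_weight l"
      unfolding balanced_matrix_def edge_weight_def using V_disjoint_L[OF v] edge_leaf_par by auto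
    thus ?thesis unfolding leaf_weight_def using \<open>par l = v\<close> by (simp add: power_divide)
  qed
  hence "(\<Sum>l\<in>ch v. (balanced_matrix$v$l)^2 / (t - balanced_matrix$l$l))
       = (\<Sum>l\<in>ch v. 1 / card (ch v) / t)"
    by (simp add: balanced_matrix_diag)
  also have "\<dots> = 1 / t" using \<open>ch v \<noteq> {}\<close> by (simp add: card_gt_0_iff)
  finally show ?thesis unfolding schur_branch_def balanced_matrix_diag by simp
qed

lemma charpoly_balanced_matrix:
  assumes ne: "\<And>v. v \<in> V \<Longrightarrow> ch v \<noteq> {}" and "V \<noteq> {}" and LV: "card L \<ge> card V"
  defines "e \<equiv> card L + 1 - card V" and "k \<equiv> card V" and "s \<equiv> sqrt (real (card V) + 1)"
  shows "charpoly balanced_matrix = [:0, 1:]^e * [:-1, 1:]^(k - 1) * [:1, 1:]^(k - 1)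
           * [:-s, 1:] * [:s, 1:]"
    (is "_ = ?P")
proof (rule poly_eqI_on_ray[where T = 1])
  fix t :: real assume "t > 1"
  obtain k' where k': "k = Suc k'" using \<open>V \<noteq> {}\<close> unfolding k_def by (cases "card V") auto
  have L_eq: "card L = e + k'" using LV k' unfolding e_def k_def by simp
  have branch: "v \<in> V \<Longrightarrow> schur_branch balanced_matrix t v = t - 1 / t" for v
    using schur_branch_balanced_matrix ne \<open>t > 1\<close> by simp
  have "1 / t < 1" using \<open>t > 1\<close> by simp
  hence "t - 1 / t \<noteq> 0" using \<open>t > 1\<close> by linarith
  have "poly (charpoly balanced_matrix) t = t ^ card L * (t - 1/t)^k * (t - k / (t - 1/t))"
    using poly_charpoly_eq_schur[OF balanced_matrix_in_S_T] \<open>t > 1\<close> \<open>t - 1 / t \<noteq> 0\<close>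
    by (simp add: balanced_matrix_diag branch balanced_matrix_root k_def)
  also have "\<dots> = t^e * (t * (t - 1/t))^k' * (t * (t - 1/t) - k)"
    unfolding L_eq k' power_add power_mult_distrib using \<open>t - 1 / t \<noteq> 0\<close> by (simp add: field_simps)
  also have "t * (t - 1/t) = t^2 - 1" using \<open>t > 1\<close> by (simp add: field_simps power2_eq_square)
  also have "t^e * (t^2 - 1)^k' * (t^2 - 1 - k) = poly ?P t"
  proof -
    have "s^2 = real k + 1" unfolding s_def k_def by simp
    hence "(t - s) * (t + s) = t^2 - 1 - k" by (simp add: power2_eq_square algebra_simps)
    moreover have "(t - 1)^k' * (t + 1)^k' = (t^2 - 1)^k'"
      by (simp add: power_mult_distrib[symmetric] power2_eq_square algebra_simps)
    moreover have "poly ?P t = t^e * ((t - 1)^k' * (t + 1)^k') * ((t - s) * (t + s))"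
      using k' by (simp add: poly_power algebra_simps)
    ultimately show ?thesis by simp
  qed
  finally show "poly (charpoly balanced_matrix) t = poly ?P t" .
qed

lemma mult_list_balanced_matrix:
  assumes "\<And>v. v \<in> V \<Longrightarrow> ch v \<noteq> {}" and "card V \<ge> 2" and "card L \<ge> card V"
  shows "mult_list balanced_matrix = {# card L + 1 - card V, card V - 1, card V - 1, 1, 1 #}"
proof -
  define e where "e = card L + 1 - card V"
  define k where "k = card V"
  define s where "s = sqrt (real (card V) + 1)"
  let ?P = "[:- 0, 1:]^e * [:-1, 1:]^(k - 1) * [:- (-1), 1:]^(k - 1) * [:-s, 1:]^1 * [:- (-s), 1:]^1"
  have "V \<noteq> {}" using assms(2) by auto
  hence cp: "charpoly balanced_matrix = ?P"
    using charpoly_balanced_matrix[OF assms(1)] assms(3) unfolding e_def k_def s_def by simp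
  have "s > 1" unfolding s_def using assms(2) by simp
  have "e \<ge> 1" "k - 1 \<ge> 1" using assms(2,3) unfolding e_def k_def by auto
  have order_P: "order x ?P = (if x = 0 then e else 0) + (if x = 1 then k - 1 else 0)
       + (if x = -1 then k - 1 else 0) + (if x = s then 1 else 0) + (if x = -s then 1 else 0)" for x
    by (simp only: order_mult order_linear_power mult_eq_0_iff power_eq_0_iff pCons_eq_0_iff
          one_neq_zero simp_thms)
  have "poly ?P x = x^e * (x - 1)^(k - 1) * (x + 1)^(k - 1) * (x - s) * (x + s)" for x
    by (simp add: poly_power algebra_simps)
  hence "{x. poly ?P x = 0} = {0, 1, -1, s, -s}"
    using \<open>e \<ge> 1\<close> \<open>k - 1 \<ge> 1\<close> \<open>s > 1\<close> by auto
  moreover have "mset_set {0, 1, -1, s, -s} = {#0, 1, -1, s, -s#}"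
    using \<open>s > 1\<close> by simp
  ultimately have "mult_list balanced_matrix = image_mset (\<lambda>x. order x ?P) {#0, 1, -1, s, -s#}"
    unfolding mult_list_def cp by simp
  also have "\<dots> = {#e, k - 1, k - 1, 1, 1#}"
    using \<open>s > 1\<close> unfolding order_P by simp
  finally show ?thesis unfolding e_def k_def .
qed

end


section \<open>Matrices with all edge entries equal to 1\<close>

locale lush_depth_two_tree = depth_two_tree E r V par
  for E :: "'n::finite \<Rightarrow> 'n \<Rightarrow> bool" and r V par +
  assumes two_leaves: "v \<in> V \<Longrightarrow> card (ch v) \<ge> 2"
    and three_branches: "card V \<ge> 3"
begin

lemma card_L_ge: "card L \<ge> 2 * card V"
proof -
  have "(\<Sum>v\<in>V. 2) \<le> (\<Sum>v\<in>V. card (ch v))" using two_leaves by (intro sum_mono) auto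
  thus ?thesis unfolding card_L_eq_sum_card_ch by simp
qed

context
  fixes A :: "real^'n^'n"
  assumes A_in_S_T: "A \<in> S_T E" and A_01: "\<And>i j. i \<noteq> j \<Longrightarrow> A$i$j \<in> {0,1}"
begin

lemma A_edge_eq_1: "i \<noteq> j \<Longrightarrow> E i j \<Longrightarrow> A$i$j = 1"
  using A_01[of i j] A_in_S_T unfolding S_T_def by auto

lemma schur_branch_01: "v \<in> V \<Longrightarrow> schur_branch A t v = t - A$v$v - (\<Sum>l\<in>ch v. 1 / (t - A$l$l))"
proof -
  assume v: "v \<in> V"
  have "A$v$l = 1" if "l \<in> ch v" for l
  proof -
    have "l \<in> L" "par l = v" using that ch_subset_L unfolding ch_def by auto
    thus ?thesis using A_edge_eq_1 edge_leaf_par V_disjoint_L v by metis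
  qed
  thus ?thesis unfolding schur_branch_def by simp
qed

lemma poly_charpoly_01:
  assumes "\<And>l. l \<in> L \<Longrightarrow> t \<noteq> A$l$l" and "\<And>v. v \<in> V \<Longrightarrow> schur_branch A t v \<noteq> 0"
  shows "poly (charpoly A) t = (\<Prod>l\<in>L. t - A$l$l) * (\<Prod>v\<in>V. schur_branch A t v)
           * (t - A$r$r - (\<Sum>v\<in>V. 1 / schur_branch A t v))"
proof -
  have "A$r$v = 1" if "v \<in> V" for v using A_edge_eq_1 edge_root_V root_notin_V that by metis
  thus ?thesis using poly_charpoly_eq_schur[OF A_in_S_T assms] by simp
qed

context
  fixes lam :: real
begin

definition lam_ch :: "'n \<Rightarrow> 'n set" where "lam_ch v = {l \<in> ch v. A$l$l = lam}"

text \<open>Classification of the branches by the behaviour of their pivot near lam: a pole, a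
  zero, or a nonzero regular value.\<close>

definition V_pole :: "'n set" where "V_pole = {v \<in> V. lam_ch v \<noteq> {}}"
definition V_zero :: "'n set" where "V_zero = {v \<in> V. lam_ch v = {} \<and> schur_branch A lam v = 0}"
definition V_reg :: "'n set" where "V_reg = {v \<in> V. lam_ch v = {} \<and> schur_branch A lam v \<noteq> 0}"

text \<open>(t - lam) * schur_branch A t v, written so that it is continuous at lam; its value
  there is minus the number of lam-leaves below v.\<close>

definition residue :: "'n \<Rightarrow> real \<Rightarrow> real" where
  "residue v t = (t - lam) * (t - A$v$v) - card (lam_ch v)
     - (t - lam) * (\<Sum>l\<in>ch v - lam_ch v. 1 / (t - A$l$l))"

text \<open>Difference quotient of schur_branch A _ v at lam, for branches without lam-leaves.\<close>

definition slope :: "'n \<Rightarrow> real \<Rightarrow> real" where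
  "slope v t = 1 + (\<Sum>l\<in>ch v. 1 / ((t - A$l$l) * (lam - A$l$l)))"

lemma V_partition: "V_pole \<union> V_zero \<union> V_reg = V"
  and V_partition_disjoint: "V_pole \<inter> V_zero = {}" "V_pole \<inter> V_reg = {}" "V_zero \<inter> V_reg = {}"
  and V_parts_subset: "V_pole \<subseteq> V" "V_zero \<subseteq> V" "V_reg \<subseteq> V"
  unfolding V_pole_def V_zero_def V_reg_def by auto

lemma schur_branch_eq_residue:
  assumes v: "v \<in> V" and "t \<noteq> lam"
  shows "schur_branch A t v = residue v t / (t - lam)"
proof -
  have "lam_ch v \<subseteq> ch v" unfolding lam_ch_def by auto
  hence "(\<Sum>l\<in>ch v. 1 / (t - A$l$l))
      = (\<Sum>l\<in>ch v - lam_ch v. 1 / (t - A$l$l)) + (\<Sum>l\<in>lam_ch v. 1 / (t - A$l$l))"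
    by (simp add: sum.subset_diff)
  also have "(\<Sum>l\<in>lam_ch v. 1 / (t - A$l$l)) = card (lam_ch v) / (t - lam)"
    by (simp add: lam_ch_def)
  finally show ?thesis
    unfolding schur_branch_01[OF v] residue_def using \<open>t \<noteq> lam\<close> by (simp add: field_simps)
qed

lemma tendsto_residue: "(residue v \<longlongrightarrow> - real (card (lam_ch v))) (at lam)"
proof -
  have "(residue v \<longlongrightarrow> (lam - lam) * (lam - A$v$v) - card (lam_ch v)
      - (lam - lam) * (\<Sum>l\<in>ch v - lam_ch v. 1 / (lam - A$l$l))) (at lam)"
    unfolding residue_def[abs_def] by (intro tendsto_intros) (auto simp: lam_ch_def)
  thus ?thesis by simp
qed

lemma schur_branch_eq_slope:
  assumes v: "v \<in> V" and "lam_ch v = {}" and "\<forall>l\<in>ch v. t \<noteq> A$l$l"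
  shows "schur_branch A t v = schur_branch A lam v + (t - lam) * slope v t"
proof -
  have "(\<Sum>l\<in>ch v. 1 / (lam - A$l$l)) - (\<Sum>l\<in>ch v. 1 / (t - A$l$l))
      = (t - lam) * (\<Sum>l\<in>ch v. 1 / ((t - A$l$l) * (lam - A$l$l)))"
    unfolding sum_subtractf[symmetric] sum_distrib_left
  proof (rule sum.cong[OF refl])
    fix l assume "l \<in> ch v"
    hence "t - A$l$l \<noteq> 0" "lam - A$l$l \<noteq> 0" using assms(2,3) unfolding lam_ch_def by auto
    thus "1 / (lam - A$l$l) - 1 / (t - A$l$l) = (t - lam) * (1 / ((t - A$l$l) * (lam - A$l$l)))"
      by (simp add: field_simps)
  qed
  thus ?thesis unfolding slope_def schur_branch_01[OF v] by (simp add: algebra_simps)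
qed

lemma tendsto_slope: "lam_ch v = {} \<Longrightarrow> (slope v \<longlongrightarrow> slope v lam) (at lam)"
  unfolding slope_def[abs_def] lam_ch_def by (intro tendsto_intros) auto

lemma slope_pos: "slope v lam > 0"
proof -
  have "(\<Sum>l\<in>ch v. 1 / ((lam - A$l$l) * (lam - A$l$l))) \<ge> 0" by (intro sum_nonneg) simp
  thus ?thesis unfolding slope_def by simp
qed

lemma tendsto_schur_branch:
  assumes "v \<in> V" and "lam_ch v = {}"
  shows "((\<lambda>t. schur_branch A t v) \<longlongrightarrow> schur_branch A lam v) (at lam)"
proof -
  have "((\<lambda>t. t - A$v$v - (\<Sum>l\<in>ch v. 1 / (t - A$l$l)))
      \<longlongrightarrow> lam - A$v$v - (\<Sum>l\<in>ch v. 1 / (lam - A$l$l))) (at lam)"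
    using assms(2) unfolding lam_ch_def by (intro tendsto_intros) auto
  thus ?thesis using schur_branch_01[OF assms(1)] by simp
qed


definition lam_leaves :: "'n set" where "lam_leaves = {l \<in> L. A$l$l = lam}"

definition generic :: "real \<Rightarrow> bool" where
  "generic t \<longleftrightarrow> t \<noteq> lam \<and> (\<forall>l\<in>L - lam_leaves. t \<noteq> A$l$l) \<and> (\<forall>v\<in>V_pole. residue v t \<noteq> 0)
     \<and> (\<forall>v\<in>V_zero \<union> V_reg. slope v t \<noteq> 0) \<and> (\<forall>v\<in>V_reg. schur_branch A t v \<noteq> 0)"

lemma eventually_generic: "eventually generic (at lam)"
proof -
  have "eventually (\<lambda>t. t \<noteq> lam) (at lam)" by (simp add: eventually_at_filter)
  moreover have "eventually (\<lambda>t. \<forall>l\<in>L - lam_leaves. t \<noteq> A$l$l) (at lam)"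
    by (intro eventually_ball_finite ballI tendsto_imp_eventually_ne[OF tendsto_ident_at])
       (auto simp: lam_leaves_def)
  moreover have "eventually (\<lambda>t. \<forall>v\<in>V_pole. residue v t \<noteq> 0) (at lam)"
    by (intro eventually_ball_finite ballI tendsto_imp_eventually_ne[OF tendsto_residue])
       (auto simp: V_pole_def)
  moreover have "eventually (\<lambda>t. \<forall>v\<in>V_zero \<union> V_reg. slope v t \<noteq> 0) (at lam)"
    by (intro eventually_ball_finite ballI tendsto_imp_eventually_ne[OF tendsto_slope])
       (auto simp: V_zero_def V_reg_def slope_pos[THEN less_imp_neq, symmetric])
  moreover have "eventually (\<lambda>t. \<forall>v\<in>V_reg. schur_branch A t v \<noteq> 0) (at lam)"
    by (intro eventually_ball_finite ballI tendsto_imp_eventually_ne[OF tendsto_schur_branch])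
       (auto simp: V_reg_def)
  ultimately show ?thesis unfolding generic_def by eventually_elim blast
qed

lemma generic_leaf: "generic t \<Longrightarrow> l \<in> L \<Longrightarrow> t \<noteq> A$l$l"
  unfolding generic_def lam_leaves_def by auto

lemma generic_schur_pole:
  "generic t \<Longrightarrow> v \<in> V_pole \<Longrightarrow> schur_branch A t v = residue v t / (t - lam)"
  using schur_branch_eq_residue V_parts_subset unfolding generic_def by blast

lemma generic_schur_zero:
  assumes "generic t" and "v \<in> V_zero"
  shows "schur_branch A t v = (t - lam) * slope v t"
proof -
  have "\<forall>l\<in>ch v. t \<noteq> A$l$l" using generic_leaf[OF assms(1)] ch_subset_L by blast
  thus ?thesis using schur_branch_eq_slope[of v t] assms(2) unfolding V_zero_def by auto
qed

lemma generic_schur_nonzero: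
  assumes g: "generic t" and v: "v \<in> V"
  shows "schur_branch A t v \<noteq> 0"
proof -
  have "t \<noteq> lam" "\<forall>v\<in>V_pole. residue v t \<noteq> 0" "\<forall>v\<in>V_zero. slope v t \<noteq> 0"
    "\<forall>v\<in>V_reg. schur_branch A t v \<noteq> 0"
    using g unfolding generic_def by auto
  moreover have "v \<in> V_pole \<or> v \<in> V_zero \<or> v \<in> V_reg" using v V_partition by blast
  ultimately show ?thesis using generic_schur_pole[OF g] generic_schur_zero[OF g] by auto
qed

definition root_pivot :: "real \<Rightarrow> real" where
  "root_pivot t = t - A$r$r - (\<Sum>v\<in>V. 1 / schur_branch A t v)"

definition cofactor :: "real \<Rightarrow> real" where
  "cofactor t = (\<Prod>l\<in>L - lam_leaves. t - A$l$l) * (\<Prod>v\<in>V_pole. residue v t)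
     * (\<Prod>v\<in>V_zero. slope v t) * (\<Prod>v\<in>V_reg. schur_branch A t v)"

lemma charpoly_factor_near_lam:
  assumes g: "generic t"
  shows "poly (charpoly A) t * (t - lam)^card V_pole
           = (t - lam)^(card lam_leaves + card V_zero) * cofactor t * root_pivot t"
proof -
  have "t \<noteq> lam" using g unfolding generic_def by auto
  have leaves: "(\<Prod>l\<in>L. t - A$l$l) = (t - lam)^card lam_leaves * (\<Prod>l\<in>L - lam_leaves. t - A$l$l)"
  proof -
    have "lam_leaves \<subseteq> L" unfolding lam_leaves_def by auto
    hence "(\<Prod>l\<in>L. t - A$l$l) = (\<Prod>l\<in>L - lam_leaves. t - A$l$l) * (\<Prod>l\<in>lam_leaves. t - A$l$l)"
      by (simp add: prod.subset_diff)
    thus ?thesis by (simp add: lam_leaves_def)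
  qed
  have "(\<Prod>v\<in>V_pole \<union> V_zero \<union> V_reg. schur_branch A t v) = (\<Prod>v\<in>V_pole. schur_branch A t v)
      * (\<Prod>v\<in>V_zero. schur_branch A t v) * (\<Prod>v\<in>V_reg. schur_branch A t v)"
    using V_partition_disjoint V_parts_subset
    by (simp add: prod.union_disjoint Int_Un_distrib2 finite_subset)
  hence "(\<Prod>v\<in>V. schur_branch A t v) = (\<Prod>v\<in>V_pole. schur_branch A t v)
      * (\<Prod>v\<in>V_zero. schur_branch A t v) * (\<Prod>v\<in>V_reg. schur_branch A t v)"
    by (simp only: V_partition)
  moreover have "(\<Prod>v\<in>V_pole. schur_branch A t v) * (t - lam)^card V_pole = (\<Prod>v\<in>V_pole. residue v t)"
    using \<open>t \<noteq> lam\<close> by (simp add: generic_schur_pole[OF g] prod_dividef flip: prod_constant)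
  moreover have "(\<Prod>v\<in>V_zero. schur_branch A t v) = (t - lam)^card V_zero * (\<Prod>v\<in>V_zero. slope v t)"
    by (simp add: generic_schur_zero[OF g] prod.distrib)
  moreover have "poly (charpoly A) t = (\<Prod>l\<in>L. t - A$l$l) * (\<Prod>v\<in>V. schur_branch A t v)
      * root_pivot t"
    unfolding root_pivot_def using generic_leaf[OF g] generic_schur_nonzero[OF g]
    by (rule poly_charpoly_01)
  ultimately show ?thesis unfolding leaves cofactor_def power_add by (simp add: ac_simps)
qed

lemma tendsto_cofactor: "\<exists>K. K \<noteq> 0 \<and> (cofactor \<longlongrightarrow> K) (at lam)"
proof (intro exI conjI)
  show "(cofactor \<longlongrightarrow> (\<Prod>l\<in>L - lam_leaves. lam - A$l$l) * (\<Prod>v\<in>V_pole. - real (card (lam_ch v)))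
      * (\<Prod>v\<in>V_zero. slope v lam) * (\<Prod>v\<in>V_reg. schur_branch A lam v)) (at lam)"
    unfolding cofactor_def[abs_def]
    by (intro tendsto_mult tendsto_prod tendsto_intros tendsto_residue tendsto_slope tendsto_schur_branch)
       (auto simp: V_zero_def V_reg_def)
  show "(\<Prod>l\<in>L - lam_leaves. lam - A$l$l) * (\<Prod>v\<in>V_pole. - real (card (lam_ch v)))
      * (\<Prod>v\<in>V_zero. slope v lam) * (\<Prod>v\<in>V_reg. schur_branch A lam v) \<noteq> 0"
    by (auto simp: lam_leaves_def V_pole_def V_reg_def prod_zero_iff slope_pos[THEN less_imp_neq, symmetric])
qed


lemma card_lam_leaves: "card lam_leaves = (\<Sum>v\<in>V. card (lam_ch v))"
proof -
  have "lam_leaves = (\<Union>v\<in>V. lam_ch v)"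
    unfolding lam_leaves_def lam_ch_def using leaf_in_ch_par par_leaf_in_V ch_subset_L by blast
  moreover have "card (\<Union>v\<in>V. lam_ch v) = (\<Sum>v\<in>V. card (lam_ch v))"
    by (rule card_UN_disjoint) (auto simp: lam_ch_def ch_def)
  ultimately show ?thesis by simp
qed

lemma card_V_pole_le: "card V_pole \<le> card lam_leaves"
proof -
  have "card V_pole = (\<Sum>v\<in>V_pole. 1)" by simp
  also have "\<dots> \<le> (\<Sum>v\<in>V_pole. card (lam_ch v))"
    by (intro sum_mono) (auto simp: V_pole_def Suc_le_eq card_gt_0_iff)
  also have "\<dots> \<le> (\<Sum>v\<in>V. card (lam_ch v))" using V_parts_subset by (intro sum_mono2) auto
  finally show ?thesis unfolding card_lam_leaves .
qed

lemma sum_indicator_eq_card: "S \<subseteq> V \<Longrightarrow> (\<Sum>v\<in>V. if v \<in> S then 1 else 0 :: nat) = card S"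
  by (simp add: sum.If_cases Int_absorb1 Int_def[symmetric] inf.absorb2)

text \<open>A branch without lam-leaves has at least two other leaves.\<close>

lemma branch_count_le:
  assumes v: "v \<in> V"
  shows "card (lam_ch v) + (if v \<in> V_zero then 1 else 0) + 1
     \<le> (if v \<in> V_pole then 1 else 0) + card (ch v)"
proof (cases "v \<in> V_pole")
  case True
  hence "v \<notin> V_zero" using V_partition_disjoint by blast
  moreover have "card (lam_ch v) \<le> card (ch v)" by (intro card_mono) (auto simp: lam_ch_def)
  ultimately show ?thesis using True by simp
next
  case False
  hence "lam_ch v = {}" using v unfolding V_pole_def by blast
  thus ?thesis using False two_leaves[OF v] by simp
qed

lemma sum_branch_counts:
  "(\<Sum>v\<in>V. card (lam_ch v) + (if v \<in> V_zero then 1 else 0) + 1) = card lam_leaves + card V_zero + card V"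
  "(\<Sum>v\<in>V. (if v \<in> V_pole then 1 else 0) + card (ch v)) = card V_pole + card L"
  by (simp_all add: sum.distrib card_lam_leaves card_L_eq_sum_card_ch
      sum_indicator_eq_card V_parts_subset del: One_nat_def)

lemma lam_count_le: "card lam_leaves + card V_zero + card V \<le> card V_pole + card L"
  unfolding sum_branch_counts[symmetric] by (intro sum_mono branch_count_le)

lemma lam_count_eq:
  assumes eq: "card lam_leaves + card V_zero + card V = card V_pole + card L"
    and "V_zero = {}" and v: "v \<in> V"
  shows "lam_ch v = ch v"
proof -
  have "card (lam_ch v) + (if v \<in> V_zero then 1 else 0) + 1 = (if v \<in> V_pole then 1 else 0) + card (ch v)"
  proof (rule sum_mono_inv[OF _ branch_count_le v])
    show "(\<Sum>v\<in>V. card (lam_ch v) + (if v \<in> V_zero then 1 else 0) + 1)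
        = (\<Sum>v\<in>V. (if v \<in> V_pole then 1 else 0) + card (ch v))"
      unfolding sum_branch_counts by (rule eq)
  qed simp_all
  hence "card (lam_ch v) = card (ch v)"
    using \<open>V_zero = {}\<close> two_leaves[OF v] v by (auto simp: V_pole_def split: if_splits)
  thus ?thesis by (intro card_subset_eq) (auto simp: lam_ch_def)
qed


lemma root_pivot_generic:
  assumes g: "generic t"
  shows "root_pivot t = t - A$r$r - (\<Sum>v\<in>V_pole. (t - lam) / residue v t)
    - (\<Sum>v\<in>V_zero. 1 / ((t - lam) * slope v t)) - (\<Sum>v\<in>V_reg. 1 / schur_branch A t v)"
proof -
  have "(\<Sum>v\<in>V_pole \<union> V_zero \<union> V_reg. 1 / schur_branch A t v) = (\<Sum>v\<in>V_pole. 1 / schur_branch A t v)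
      + (\<Sum>v\<in>V_zero. 1 / schur_branch A t v) + (\<Sum>v\<in>V_reg. 1 / schur_branch A t v)"
    using V_partition_disjoint V_parts_subset
    by (simp add: sum.union_disjoint Int_Un_distrib2 finite_subset)
  hence "(\<Sum>v\<in>V. 1 / schur_branch A t v) = (\<Sum>v\<in>V_pole. 1 / schur_branch A t v)
      + (\<Sum>v\<in>V_zero. 1 / schur_branch A t v) + (\<Sum>v\<in>V_reg. 1 / schur_branch A t v)"
    by (simp only: V_partition)
  thus ?thesis unfolding root_pivot_def
    by (simp add: generic_schur_pole[OF g] generic_schur_zero[OF g] cong: sum.cong)
qed

lemma tendsto_root_pivot_pole:
  "((\<lambda>t. (t - lam) * root_pivot t) \<longlongrightarrow> - (\<Sum>v\<in>V_zero. 1 / slope v lam)) (at lam)"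
proof -
  let ?F = "\<lambda>t. (t - lam) * (t - A$r$r) - (\<Sum>v\<in>V_pole. (t - lam)^2 / residue v t)
    - (\<Sum>v\<in>V_zero. 1 / slope v t) - (\<Sum>v\<in>V_reg. (t - lam) / schur_branch A t v)"
  have "(?F \<longlongrightarrow> (lam - lam) * (lam - A$r$r) - (\<Sum>v\<in>V_pole. (lam - lam)^2 / - real (card (lam_ch v)))
    - (\<Sum>v\<in>V_zero. 1 / slope v lam) - (\<Sum>v\<in>V_reg. (lam - lam) / schur_branch A lam v)) (at lam)"
    by (intro tendsto_intros tendsto_residue tendsto_slope tendsto_schur_branch)
       (auto simp: V_pole_def V_zero_def V_reg_def slope_pos[THEN less_imp_neq, symmetric])
  hence "(?F \<longlongrightarrow> - (\<Sum>v\<in>V_zero. 1 / slope v lam)) (at lam)" by simp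
  moreover have "eventually (\<lambda>t. ?F t = (t - lam) * root_pivot t) (at lam)"
    using eventually_generic
  proof eventually_elim
    case (elim t)
    hence "t - lam \<noteq> 0" unfolding generic_def by auto
    hence "(t - lam) * (\<Sum>v\<in>V_zero. 1 / ((t - lam) * slope v t)) = (\<Sum>v\<in>V_zero. 1 / slope v t)"
      by (simp add: sum_distrib_left)
    thus ?case unfolding root_pivot_generic[OF elim]
      by (simp add: right_diff_distrib sum_distrib_left power2_eq_square)
  qed
  ultimately show ?thesis by (rule Lim_transform_eventually)
qed


lemma tendsto_root_pivot_regular:
  assumes "V_zero = {}"
  shows "(root_pivot \<longlongrightarrow> lam - A$r$r - (\<Sum>v\<in>V_reg. 1 / schur_branch A lam v)) (at lam)"
proof -
  let ?F = "\<lambda>t. t - A$r$r - (\<Sum>v\<in>V_pole. (t - lam) / residue v t) - (\<Sum>v\<in>V_reg. 1 / schur_branch A t v)"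
  have "(?F \<longlongrightarrow> lam - A$r$r - (\<Sum>v\<in>V_pole. (lam - lam) / - real (card (lam_ch v)))
      - (\<Sum>v\<in>V_reg. 1 / schur_branch A lam v)) (at lam)"
    by (intro tendsto_intros tendsto_residue tendsto_schur_branch) (auto simp: V_pole_def V_reg_def)
  moreover have "eventually (\<lambda>t. ?F t = root_pivot t) (at lam)"
    using eventually_generic by eventually_elim (simp add: root_pivot_generic assms)
  ultimately show ?thesis by (auto intro: Lim_transform_eventually)
qed

lemma tendsto_root_pivot_quotient:
  assumes "V_zero = {}" and a: "A$r$r = lam - (\<Sum>v\<in>V_reg. 1 / schur_branch A lam v)"
  shows "\<exists>c > 0. ((\<lambda>t. root_pivot t / (t - lam)) \<longlongrightarrow> c) (at lam)"
proof -
  let ?F = "\<lambda>t. 1 - (\<Sum>v\<in>V_pole. 1 / residue v t)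
      + (\<Sum>v\<in>V_reg. slope v t / (schur_branch A t v * schur_branch A lam v))"
  let ?c = "1 - (\<Sum>v\<in>V_pole. 1 / - real (card (lam_ch v)))
      + (\<Sum>v\<in>V_reg. slope v lam / (schur_branch A lam v * schur_branch A lam v))"
  have "(?F \<longlongrightarrow> ?c) (at lam)"
    by (intro tendsto_intros tendsto_residue tendsto_slope tendsto_schur_branch)
       (auto simp: V_pole_def V_reg_def)
  moreover have "eventually (\<lambda>t. ?F t = root_pivot t / (t - lam)) (at lam)"
    using eventually_generic
  proof eventually_elim
    case (elim t)
    hence "t - lam \<noteq> 0" unfolding generic_def by auto
    have "1 / schur_branch A lam v - 1 / schur_branch A t v
        = (t - lam) * (slope v t / (schur_branch A t v * schur_branch A lam v))" if v: "v \<in> V_reg" for v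
    proof -
      have "\<forall>l\<in>ch v. t \<noteq> A$l$l" using generic_leaf[OF elim] ch_subset_L by blast
      hence "schur_branch A t v = schur_branch A lam v + (t - lam) * slope v t"
        using v schur_branch_eq_slope unfolding V_reg_def by blast
      moreover have "schur_branch A t v \<noteq> 0" "schur_branch A lam v \<noteq> 0"
        using v V_parts_subset generic_schur_nonzero[OF elim] unfolding V_reg_def by auto
      ultimately show ?thesis by (simp add: field_simps)
    qed
    hence "(\<Sum>v\<in>V_reg. 1 / schur_branch A lam v) - (\<Sum>v\<in>V_reg. 1 / schur_branch A t v)
        = (t - lam) * (\<Sum>v\<in>V_reg. slope v t / (schur_branch A t v * schur_branch A lam v))"
      by (simp add: sum_subtractf[symmetric] sum_distrib_left)
    moreover have "(\<Sum>v\<in>V_pole. (t - lam) / residue v t) = (t - lam) * (\<Sum>v\<in>V_pole. 1 / residue v t)"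
      by (simp add: sum_distrib_left)
    ultimately have "root_pivot t = (t - lam) * ?F t"
      unfolding root_pivot_generic[OF elim] a \<open>V_zero = {}\<close> by (simp add: algebra_simps)
    thus ?case using \<open>t - lam \<noteq> 0\<close> by simp
  qed
  moreover have "?c > 0"
  proof -
    have "(\<Sum>v\<in>V_pole. 1 / - real (card (lam_ch v))) \<le> 0" by (intro sum_nonpos) simp
    moreover have "(\<Sum>v\<in>V_reg. slope v lam / (schur_branch A lam v * schur_branch A lam v)) \<ge> 0"
      using slope_pos by (intro sum_nonneg divide_nonneg_nonneg) (auto simp: less_imp_le)
    ultimately show ?thesis by linarith
  qed
  ultimately show ?thesis by (blast intro: Lim_transform_eventually)
qed


lemma eventually_charpoly_factor:
  "eventually (\<lambda>t. poly (charpoly A) t * (t - lam)^card V_pole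
     = (t - lam)^(card lam_leaves + card V_zero) * (cofactor t * root_pivot t)) (at lam)"
  using eventually_generic by eventually_elim (simp add: charpoly_factor_near_lam mult.assoc)

lemma order_lam_V_zero:
  assumes "V_zero \<noteq> {}"
  shows "order lam (charpoly A) = card lam_leaves + card V_zero - (card V_pole + 1)"
proof -
  obtain K where "K \<noteq> 0" and K: "(cofactor \<longlongrightarrow> K) (at lam)" using tendsto_cofactor by blast
  have "finite V_zero" using finite_subset[OF V_parts_subset(2)] by simp
  hence "card V_zero \<ge> 1" using assms by (simp add: Suc_le_eq card_gt_0_iff)
  have "(\<Sum>v\<in>V_zero. 1 / slope v lam) > 0"
    using assms \<open>finite V_zero\<close> slope_pos by (intro sum_pos) auto
  moreover have "eventually (\<lambda>t. poly (charpoly A) t * (t - lam)^(card V_pole + 1)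
      = (t - lam)^(card lam_leaves + card V_zero) * (cofactor t * ((t - lam) * root_pivot t))) (at lam)"
    using eventually_charpoly_factor by eventually_elim (simp add: ac_simps)
  ultimately show ?thesis
    using \<open>K \<noteq> 0\<close> \<open>card V_zero \<ge> 1\<close> card_V_pole_le
    by (intro order_eq_of_eventually_factor'[OF _ tendsto_mult[OF K tendsto_root_pivot_pole]]) auto
qed

lemma order_lam_regular:
  assumes "V_zero = {}" and "A$r$r \<noteq> lam - (\<Sum>v\<in>V_reg. 1 / schur_branch A lam v)"
  shows "order lam (charpoly A) = card lam_leaves - card V_pole"
proof -
  obtain K where "K \<noteq> 0" and K: "(cofactor \<longlongrightarrow> K) (at lam)" using tendsto_cofactor by blast
  show ?thesis
    using eventually_charpoly_factor \<open>K \<noteq> 0\<close> assms card_V_pole_le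
    by (intro order_eq_of_eventually_factor'[OF _ tendsto_mult[OF K tendsto_root_pivot_regular]]) auto
qed

lemma order_lam_double:
  assumes "V_zero = {}" and "A$r$r = lam - (\<Sum>v\<in>V_reg. 1 / schur_branch A lam v)"
  shows "order lam (charpoly A) = card lam_leaves + 1 - card V_pole"
proof -
  obtain K where "K \<noteq> 0" and K: "(cofactor \<longlongrightarrow> K) (at lam)" using tendsto_cofactor by blast
  obtain c where "c > 0" and c: "((\<lambda>t. root_pivot t / (t - lam)) \<longlongrightarrow> c) (at lam)"
    using tendsto_root_pivot_quotient[OF assms] by auto
  have "eventually (\<lambda>t. poly (charpoly A) t * (t - lam)^card V_pole
      = (t - lam)^(card lam_leaves + 1) * (cofactor t * (root_pivot t / (t - lam)))) (at lam)"
    using eventually_charpoly_factor eventually_generic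
    by eventually_elim (auto simp: \<open>V_zero = {}\<close> generic_def)
  thus ?thesis using \<open>K \<noteq> 0\<close> \<open>c > 0\<close> card_V_pole_le
    by (intro order_eq_of_eventually_factor'[OF _ tendsto_mult[OF K c]]) auto
qed

text \<open>By the three lemmas above the order of lam is |lam_leaves| + |V_zero| - |V_pole| + q with
  q \<le> 1, while lam_count_le bounds |lam_leaves| + |V_zero| - |V_pole| by |L| - |V|. Hence the
  order |L| + 1 - |V| forces q = 1 and equality in every branch count.\<close>

lemma lam_diagonal:
  assumes ord: "order lam (charpoly A) = card L + 1 - card V"
  shows "(\<forall>l\<in>L. A$l$l = lam) \<and> A$r$r = lam"
proof -
  have count: "card lam_leaves + card V_zero + card V \<le> card V_pole + card L"
    by (rule lam_count_le)
  have "V_zero = {}" using order_lam_V_zero ord count card_L_ge by fastforce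
  moreover have root: "A$r$r = lam - (\<Sum>v\<in>V_reg. 1 / schur_branch A lam v)"
    using order_lam_regular[OF \<open>V_zero = {}\<close>] ord count card_L_ge by fastforce
  ultimately have "card lam_leaves + card V_zero + card V = card V_pole + card L"
    using order_lam_double ord count card_L_ge card_V_pole_le by fastforce
  hence full: "lam_ch v = ch v" if "v \<in> V" for v
    using lam_count_eq \<open>V_zero = {}\<close> that by blast
  have "\<forall>l\<in>L. A$l$l = lam"
    using full leaf_in_ch_par par_leaf_in_V unfolding lam_ch_def by blast
  moreover have "V_reg = {}"
    using full two_leaves unfolding V_reg_def by fastforce
  ultimately show ?thesis using root by simp
qed

end


context
  fixes lam mu :: real
  assumes leaf_diag: "\<And>l. l \<in> L \<Longrightarrow> A$l$l = lam" and root_diag: "A$r$r = lam"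
    and mu_ne_lam: "mu \<noteq> lam"
begin

text \<open>(t - lam) * schur_branch A t v once all leaves carry lam.\<close>

definition branch_quadratic :: "'n \<Rightarrow> real \<Rightarrow> real" where
  "branch_quadratic v t = (t - A$v$v) * (t - lam) - card (ch v)"

definition quadratic_slope :: "'n \<Rightarrow> real \<Rightarrow> real" where
  "quadratic_slope v t = t + mu - A$v$v - lam"

definition V_root :: "'n set" where "V_root = {v \<in> V. branch_quadratic v mu = 0}"

lemma branch_quadratic_expand: "branch_quadratic v t = branch_quadratic v mu + (t - mu) * quadratic_slope v t"
  unfolding branch_quadratic_def quadratic_slope_def by (simp add: algebra_simps)

lemma V_root_factor: "v \<in> V_root \<Longrightarrow> branch_quadratic v t = (t - mu) * quadratic_slope v t"
  using branch_quadratic_expand[of v t] unfolding V_root_def by simp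

lemma quadratic_slope_V_root:
  assumes "v \<in> V_root"
  shows "(mu - lam) * quadratic_slope v mu = (mu - lam)^2 + card (ch v)"
  using assms unfolding V_root_def branch_quadratic_def quadratic_slope_def
  by (simp add: algebra_simps power2_eq_square)

lemma quadratic_slope_V_root_nonzero: "v \<in> V_root \<Longrightarrow> quadratic_slope v mu \<noteq> 0"
proof
  assume "v \<in> V_root" and "quadratic_slope v mu = 0"
  hence "(mu - lam)^2 + card (ch v) = 0" using quadratic_slope_V_root[of v] by simp
  moreover have "(mu - lam)^2 > 0" using mu_ne_lam by simp
  ultimately show False by (simp add: add_pos_nonneg)
qed

lemma schur_branch_eq_quadratic:
  assumes "v \<in> V" and "t \<noteq> lam"
  shows "schur_branch A t v = branch_quadratic v t / (t - lam)"
proof -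
  have "(\<Sum>l\<in>ch v. 1 / (t - A$l$l)) = card (ch v) / (t - lam)"
    using leaf_diag ch_subset_L by (simp add: subset_iff)
  thus ?thesis unfolding schur_branch_01[OF assms(1)] branch_quadratic_def
    using \<open>t \<noteq> lam\<close> by (simp add: field_simps)
qed

lemma charpoly_near_mu:
  assumes "t \<noteq> lam" and nz: "\<And>v. v \<in> V \<Longrightarrow> branch_quadratic v t \<noteq> 0"
  shows "poly (charpoly A) t = (t - lam)^(card L + 1 - card V) * (\<Prod>v\<in>V. branch_quadratic v t)
      * (1 - (\<Sum>v\<in>V. 1 / branch_quadratic v t))"
proof -
  have tl: "t - lam \<noteq> 0" using assms(1) by simp
  have branch: "schur_branch A t v = branch_quadratic v t / (t - lam)" if "v \<in> V" for v
    using schur_branch_eq_quadratic[OF that assms(1)] .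
  have "poly (charpoly A) t = (\<Prod>l\<in>L. t - A$l$l) * (\<Prod>v\<in>V. schur_branch A t v)
      * (t - A$r$r - (\<Sum>v\<in>V. 1 / schur_branch A t v))"
    using leaf_diag tl nz branch by (intro poly_charpoly_01) auto
  also have "(\<Prod>l\<in>L. t - A$l$l) = (t - lam)^card L"
    using leaf_diag by simp
  also have "(\<Prod>v\<in>V. schur_branch A t v) = (\<Prod>v\<in>V. branch_quadratic v t) / (t - lam)^card V"
    using branch by (simp add: prod_dividef)
  also have "(\<Sum>v\<in>V. 1 / schur_branch A t v) = (t - lam) * (\<Sum>v\<in>V. 1 / branch_quadratic v t)"
    using branch by (simp add: sum_distrib_left)
  also have "t - A$r$r - (t - lam) * (\<Sum>v\<in>V. 1 / branch_quadratic v t)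
      = (t - lam) * (1 - (\<Sum>v\<in>V. 1 / branch_quadratic v t))"
    using root_diag by (simp add: right_diff_distrib)
  also have "(t - lam)^card L * ((\<Prod>v\<in>V. branch_quadratic v t) / (t - lam)^card V)
      * ((t - lam) * (1 - (\<Sum>v\<in>V. 1 / branch_quadratic v t)))
      = (t - lam)^(card L + 1) / (t - lam)^card V * (\<Prod>v\<in>V. branch_quadratic v t)
      * (1 - (\<Sum>v\<in>V. 1 / branch_quadratic v t))"
    by (simp add: field_simps)
  also have "(t - lam)^(card L + 1) / (t - lam)^card V = (t - lam)^(card L + 1 - card V)"
    using tl card_L_ge by (simp add: power_diff)
  finally show ?thesis .
qed


lemma eventually_near_mu:
  "eventually (\<lambda>t. t \<noteq> mu \<and> t \<noteq> lam \<and> (\<forall>v\<in>V. branch_quadratic v t \<noteq> 0)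
     \<and> (\<forall>v\<in>V_root. quadratic_slope v t \<noteq> 0)) (at mu)"
proof -
  have cont_f: "((\<lambda>t. branch_quadratic v t) \<longlongrightarrow> branch_quadratic v mu) (at mu)" for v
    unfolding branch_quadratic_def by (intro tendsto_intros)
  have cont_g: "((\<lambda>t. quadratic_slope v t) \<longlongrightarrow> quadratic_slope v mu) (at mu)" for v
    unfolding quadratic_slope_def by (intro tendsto_intros)
  have "eventually (\<lambda>t. t \<noteq> mu) (at mu)" by (simp add: eventually_at_filter)
  moreover have "eventually (\<lambda>t. t \<noteq> lam) (at mu)"
    using mu_ne_lam by (intro tendsto_imp_eventually_ne[OF tendsto_ident_at])
  moreover have "eventually (\<lambda>t. \<forall>v\<in>V - V_root. branch_quadratic v t \<noteq> 0) (at mu)"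
    by (intro eventually_ball_finite ballI tendsto_imp_eventually_ne[OF cont_f]) (auto simp: V_root_def)
  moreover have "eventually (\<lambda>t. \<forall>v\<in>V_root. quadratic_slope v t \<noteq> 0) (at mu)"
    by (intro eventually_ball_finite ballI tendsto_imp_eventually_ne[OF cont_g] quadratic_slope_V_root_nonzero)
       (auto simp: V_root_def)
  ultimately show ?thesis
  proof eventually_elim
    case (elim t)
    moreover have "branch_quadratic v t \<noteq> 0" if "v \<in> V_root" for v
      using elim V_root_factor[OF that, of t] that by auto
    ultimately show ?case by blast
  qed
qed

lemma V_root_inverse_slope_pos:
  assumes "V_root \<noteq> {}"
  shows "(mu - lam) * (\<Sum>v\<in>V_root. 1 / quadratic_slope v mu) > 0"
proof -
  have "(mu - lam) * (\<Sum>v\<in>V_root. 1 / quadratic_slope v mu)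
      = (\<Sum>v\<in>V_root. (mu - lam)^2 / ((mu - lam)^2 + card (ch v)))"
    unfolding sum_distrib_left
  proof (rule sum.cong[OF refl])
    fix v assume v: "v \<in> V_root"
    have "(mu - lam) * (1 / quadratic_slope v mu) = (mu - lam)^2 / ((mu - lam) * quadratic_slope v mu)"
      using mu_ne_lam quadratic_slope_V_root_nonzero[OF v] by (simp add: field_simps power2_eq_square)
    thus "(mu - lam) * (1 / quadratic_slope v mu) = (mu - lam)^2 / ((mu - lam)^2 + card (ch v))"
      using quadratic_slope_V_root[OF v] by simp
  qed
  also have "\<dots> > 0"
    using assms mu_ne_lam by (intro sum_pos divide_pos_pos add_pos_nonneg) (auto simp: V_root_def)
  finally show ?thesis .
qed

lemma order_mu_V_root:
  assumes "V_root \<noteq> {}"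
  shows "order mu (charpoly A) = card V_root - 1"
proof -
  define e where "e = card L + 1 - card V"
  define J where "J = V - V_root"
  have VIJ: "V_root \<union> J = V" "V_root \<inter> J = {}" "finite V_root" "finite J"
    unfolding J_def V_root_def by auto
  have prod_V: "(\<Prod>v\<in>V. f v) = (\<Prod>v\<in>V_root. f v) * (\<Prod>v\<in>J. f v)" for f :: "'n \<Rightarrow> real"
    using prod.union_disjoint[OF VIJ(3,4,2), of f] by (simp only: VIJ(1))
  have sum_V: "(\<Sum>v\<in>V. f v) = (\<Sum>v\<in>V_root. f v) + (\<Sum>v\<in>J. f v)" for f :: "'n \<Rightarrow> real"
    using sum.union_disjoint[OF VIJ(3,4,2), of f] by (simp only: VIJ(1))
  define H where "H t = (t - mu) * (1 - (\<Sum>v\<in>J. 1 / branch_quadratic v t))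
    - (\<Sum>v\<in>V_root. 1 / quadratic_slope v t)" for t
  define G where "G t = (t - lam)^e * (\<Prod>v\<in>V_root. quadratic_slope v t)
    * (\<Prod>v\<in>J. branch_quadratic v t) * H t" for t
  have "eventually (\<lambda>t. poly (charpoly A) t * (t - mu)^1 = (t - mu)^card V_root * G t) (at mu)"
    using eventually_near_mu
  proof eventually_elim
    case (elim t)
    hence "t - mu \<noteq> 0" by simp
    have "(\<Prod>v\<in>V. branch_quadratic v t)
        = (t - mu)^card V_root * (\<Prod>v\<in>V_root. quadratic_slope v t) * (\<Prod>v\<in>J. branch_quadratic v t)"
      unfolding prod_V by (simp add: V_root_factor prod.distrib)
    moreover have "(t - mu) * (1 - (\<Sum>v\<in>V. 1 / branch_quadratic v t)) = H t"
    proof -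
      have "(t - mu) * (\<Sum>v\<in>V_root. 1 / branch_quadratic v t) = (\<Sum>v\<in>V_root. 1 / quadratic_slope v t)"
        using \<open>t - mu \<noteq> 0\<close> by (simp add: sum_distrib_left V_root_factor)
      thus ?thesis unfolding H_def sum_V by (simp add: algebra_simps)
    qed
    ultimately show ?case
      using charpoly_near_mu[of t] elim unfolding G_def e_def by (simp add: ac_simps)
  qed
  moreover have "(G \<longlongrightarrow> (mu - lam)^e * (\<Prod>v\<in>V_root. quadratic_slope v mu)
      * (\<Prod>v\<in>J. branch_quadratic v mu) * ((mu - mu) * (1 - (\<Sum>v\<in>J. 1 / branch_quadratic v mu))
      - (\<Sum>v\<in>V_root. 1 / quadratic_slope v mu))) (at mu)"
    unfolding G_def[abs_def] H_def branch_quadratic_def quadratic_slope_def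
    by (intro tendsto_intros)
       (use quadratic_slope_V_root_nonzero in \<open>auto simp: J_def V_root_def branch_quadratic_def quadratic_slope_def\<close>)
  moreover have "(mu - lam) * (\<Sum>v\<in>V_root. 1 / quadratic_slope v mu) > 0"
    using V_root_inverse_slope_pos[OF assms] .
  moreover have "card V_root \<ge> 1" using assms VIJ(3) by (simp add: Suc_le_eq card_gt_0_iff)
  ultimately show ?thesis
    using mu_ne_lam quadratic_slope_V_root_nonzero
    by (intro order_eq_of_eventually_factor') (auto simp: J_def V_root_def prod_zero_iff)
qed


definition defect_slope :: "real \<Rightarrow> real" where
  "defect_slope t = (\<Sum>v\<in>V. quadratic_slope v t / (branch_quadratic v t * branch_quadratic v mu))"

lemma defect_slope_pos:
  assumes "V_root = {}" and sum1: "(\<Sum>v\<in>V. 1 / branch_quadratic v mu) = 1"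
  shows "(mu - lam) * defect_slope mu > 0"
proof -
  have f_mu: "v \<in> V \<Longrightarrow> branch_quadratic v mu \<noteq> 0" for v using assms(1) unfolding V_root_def by auto
  have "(mu - lam) * defect_slope mu = (\<Sum>v\<in>V. 1 / branch_quadratic v mu)
      + (\<Sum>v\<in>V. ((mu - lam)^2 + card (ch v)) / (branch_quadratic v mu)^2)"
    unfolding defect_slope_def sum_distrib_left sum.distrib[symmetric]
  proof (rule sum.cong[OF refl])
    fix v assume "v \<in> V"
    have "(mu - lam) * quadratic_slope v mu = branch_quadratic v mu + (mu - lam)^2 + card (ch v)"
      unfolding branch_quadratic_def quadratic_slope_def by (simp add: algebra_simps power2_eq_square)
    thus "(mu - lam) * (quadratic_slope v mu / (branch_quadratic v mu * branch_quadratic v mu))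
        = 1 / branch_quadratic v mu + ((mu - lam)^2 + card (ch v)) / (branch_quadratic v mu)^2"
      using f_mu[OF \<open>v \<in> V\<close>] by (simp add: field_simps power2_eq_square)
  qed
  moreover have "(\<Sum>v\<in>V. ((mu - lam)^2 + card (ch v)) / (branch_quadratic v mu)^2) \<ge> 0"
    by (intro sum_nonneg divide_nonneg_nonneg add_nonneg_nonneg) auto
  ultimately show ?thesis using sum1 by simp
qed

lemma order_mu_no_V_root:
  assumes "V_root = {}"
  shows "order mu (charpoly A) \<le> 1"
proof -
  define e where "e = card L + 1 - card V"
  have f_mu: "v \<in> V \<Longrightarrow> branch_quadratic v mu \<noteq> 0" for v using assms unfolding V_root_def by auto
  define P where "P t = (t - lam)^e * (\<Prod>v\<in>V. branch_quadratic v t)" for t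
  define S where "S t = 1 - (\<Sum>v\<in>V. 1 / branch_quadratic v t)" for t
  have P: "(P \<longlongrightarrow> P mu) (at mu)" "P mu \<noteq> 0"
    unfolding P_def branch_quadratic_def using mu_ne_lam f_mu
    by (auto intro!: tendsto_intros simp: branch_quadratic_def)
  have PS: "eventually (\<lambda>t. poly (charpoly A) t = P t * S t) (at mu)"
    using eventually_near_mu
    by eventually_elim (simp add: charpoly_near_mu P_def S_def e_def)
  show ?thesis
  proof (cases "S mu = 0")
    case False
    have S: "(S \<longlongrightarrow> S mu) (at mu)"
      unfolding S_def branch_quadratic_def using f_mu
      by (intro tendsto_intros) (auto simp: branch_quadratic_def)
    have "eventually (\<lambda>t. poly (charpoly A) t = (t - mu)^0 * (P t * S t)) (at mu)"
      using PS by simp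
    hence "order mu (charpoly A) = 0"
      using False P(2) by (intro order_eq_of_eventually_factor[OF _ tendsto_mult[OF P(1) S]]) auto
    thus ?thesis by simp
  next
    case True
    have "eventually (\<lambda>t. poly (charpoly A) t = (t - mu)^1 * (P t * defect_slope t)) (at mu)"
      using eventually_near_mu PS
    proof eventually_elim
      case (elim t)
      have "(\<Sum>v\<in>V. 1 / branch_quadratic v mu) - (\<Sum>v\<in>V. 1 / branch_quadratic v t) = (t - mu) * defect_slope t"
        unfolding defect_slope_def sum_subtractf[symmetric] sum_distrib_left
      proof (rule sum.cong[OF refl])
        fix v assume "v \<in> V"
        thus "1 / branch_quadratic v mu - 1 / branch_quadratic v t
            = (t - mu) * (quadratic_slope v t / (branch_quadratic v t * branch_quadratic v mu))"
          using elim f_mu branch_quadratic_expand[of v t] by (simp add: field_simps)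
      qed
      hence "S t = (t - mu) * defect_slope t" using True unfolding S_def by simp
      thus ?case using elim by simp
    qed
    moreover have "(defect_slope \<longlongrightarrow> defect_slope mu) (at mu)"
      unfolding defect_slope_def[abs_def] branch_quadratic_def quadratic_slope_def using f_mu
      by (intro tendsto_intros) (auto simp: branch_quadratic_def)
    moreover have "defect_slope mu \<noteq> 0"
      using defect_slope_pos[OF assms] True unfolding S_def by fastforce
    ultimately have "order mu (charpoly A) = 1"
      using P(2) by (intro order_eq_of_eventually_factor[OF _ tendsto_mult[OF P(1)]]) auto
    thus ?thesis by simp
  qed
qed

lemma mu_branch_equation:
  assumes "order mu (charpoly A) = card V - 1" and v: "v \<in> V"
  shows "(mu - A$v$v) * (mu - lam) = card (ch v)"
proof -
  have "V_root \<noteq> {}" using order_mu_no_V_root assms(1) three_branches by fastforce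
  hence "card V_root = card V" using order_mu_V_root assms(1) three_branches by simp
  hence "V_root = V" by (intro card_subset_eq) (auto simp: V_root_def)
  thus ?thesis using v unfolding V_root_def branch_quadratic_def by auto
qed

end

end

lemma mult_list_balanced_matrix_lush:
  "mult_list balanced_matrix = {# card L + 1 - card V, card V - 1, card V - 1, 1, 1 #}"
proof (rule mult_list_balanced_matrix)
  show "ch v \<noteq> {}" if "v \<in> V" for v using two_leaves[OF that] by auto
qed (use three_branches card_L_ge in auto)

lemma no_01_realisation:
  assumes "u \<in> V" "w \<in> V" "card (ch u) \<noteq> card (ch w)"
    and A: "A \<in> S_T E" and A_01: "\<And>i j. i \<noteq> j \<Longrightarrow> A$i$j \<in> {0,1}"
    and ml: "mult_list A = {# card L + 1 - card V, card V - 1, card V - 1, 1, 1 #}"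
  shows False
proof -
  define roots where "roots = {x. poly (charpoly A) x = 0}"
  have ml_roots: "mult_list A = image_mset (\<lambda>x. order x (charpoly A)) (mset_set roots)"
    unfolding mult_list_def roots_def ..
  have "finite roots"
  proof (rule ccontr)
    assume "infinite roots"
    hence "mult_list A = {#}" unfolding ml_roots by simp
    thus False using ml by simp
  qed
  have distinct: "card L + 1 - card V \<noteq> card V - 1" "card V - 1 \<noteq> 1"
    using card_L_ge three_branches by auto
  have "card L + 1 - card V \<in># mult_list A" using ml by simp
  then obtain lam where lam: "order lam (charpoly A) = card L + 1 - card V"
    unfolding ml_roots using \<open>finite roots\<close> by auto
  have "count (mult_list A) (card V - 1) = 2" using ml distinct by simp
  hence "card {x \<in> roots. order x (charpoly A) = card V - 1} = 2"
    unfolding ml_roots count_image_mset_eq_card_vimage[OF \<open>finite roots\<close>] .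
  then obtain mu nu where "mu \<noteq> nu" and mu: "order mu (charpoly A) = card V - 1"
    and nu: "order nu (charpoly A) = card V - 1"
    by (auto simp: card_2_iff)
  have "mu \<noteq> lam" "nu \<noteq> lam" using lam mu nu distinct by auto
  have diag: "\<And>l. l \<in> L \<Longrightarrow> A$l$l = lam" "A$r$r = lam"
    using lam_diagonal[OF A A_01 lam] by auto
  have "real (card (ch v)) = (lam - nu) * (mu - lam)" if v: "v \<in> V" for v
  proof -
    have "(mu - A$v$v) * (mu - lam) = card (ch v)" "(nu - A$v$v) * (nu - lam) = card (ch v)"
      using mu_branch_equation[OF A A_01 diag \<open>mu \<noteq> lam\<close> mu v]
        mu_branch_equation[OF A A_01 diag \<open>nu \<noteq> lam\<close> nu v] by auto
    hence "(mu - nu) * (mu + nu - A$v$v - lam) = 0" by (simp add: algebra_simps)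
    hence "A$v$v = mu + nu - lam" using \<open>mu \<noteq> nu\<close> by simp
    hence "(mu - (mu + nu - lam)) * (mu - lam) = card (ch v)"
      using \<open>(mu - A$v$v) * (mu - lam) = card (ch v)\<close> by simp
    thus ?thesis by (simp add: algebra_simps)
  qed
  thus False using assms(1-3) by (metis of_nat_eq_iff)
qed

end


section \<open>Rooted trees\<close>

locale rooted_tree =
  fixes E :: "'n::finite \<Rightarrow> 'n \<Rightarrow> bool" and r :: 'n
  assumes tree: "is_tree E"
begin

abbreviation "depth v \<equiv> tdist E r v"

lemma edge_sym: "E u v \<Longrightarrow> E v u" using tree unfolding is_tree_def by auto
lemma edge_irrefl: "\<not> E u u" using tree unfolding is_tree_def by auto
lemma edge_connected: "E\<^sup>*\<^sup>* u v" using tree unfolding is_tree_def by auto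
lemma card_graph_edges: "card (graph_edges E) = CARD('n) - 1" using tree unfolding is_tree_def by auto

lemma relpowp_tdist: "(E ^^ tdist E u v) u v"
proof -
  obtain n where "(E ^^ n) u v" using edge_connected[of u v] by (metis rtranclp_imp_relpowp)
  thus ?thesis unfolding tdist_def by (rule LeastI)
qed

lemma tdist_le: "(E ^^ n) u v \<Longrightarrow> tdist E u v \<le> n"
  unfolding tdist_def by (rule Least_le)

lemma tdist_eq_0_iff: "tdist E u v = 0 \<longleftrightarrow> u = v"
proof
  assume "tdist E u v = 0" thus "u = v" using relpowp_tdist[of u v] by simp
next
  assume "u = v" thus "tdist E u v = 0" using tdist_le[of 0 u v] by simp
qed

lemma tdist_edge: "E u v \<Longrightarrow> tdist E u v = 1"
proof -
  assume e: "E u v"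
  have "tdist E u v \<le> 1" using e by (intro tdist_le) auto
  moreover have "u \<noteq> v" using e edge_irrefl by auto
  ultimately show ?thesis using tdist_eq_0_iff[of u v] by linarith
qed

lemma depth_edge_le: "E u v \<Longrightarrow> depth v \<le> depth u + 1"
proof -
  assume e: "E u v"
  have "(E ^^ Suc (depth u)) r v" using relpowp_tdist[of r u] e by (rule relpowp_Suc_I)
  thus ?thesis using tdist_le by fastforce
qed

lemma parent_exists: "v \<noteq> r \<Longrightarrow> \<exists>u. E u v \<and> depth u + 1 = depth v"
proof -
  assume "v \<noteq> r"
  hence "depth v \<noteq> 0" using tdist_eq_0_iff by auto
  then obtain n where n: "depth v = Suc n" by (cases "depth v") auto
  have "(E ^^ Suc n) r v" using relpowp_tdist[of r v] n by simp
  then obtain u where u: "(E ^^ n) r u" "E u v" by (rule relpowp_Suc_E)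
  have "depth u \<le> n" using u(1) by (rule tdist_le)
  moreover have "depth v \<le> depth u + 1" using u(2) by (rule depth_edge_le)
  ultimately show ?thesis using u n by (intro exI[of _ u]) auto
qed

definition parent :: "'n \<Rightarrow> 'n" where "parent v = (SOME u. E u v \<and> depth u + 1 = depth v)"

lemma parent: "v \<noteq> r \<Longrightarrow> E (parent v) v \<and> depth (parent v) + 1 = depth v"
  unfolding parent_def by (rule someI_ex) (rule parent_exists)

text \<open>The CARD('n) - 1 parent edges are distinct, and a tree has no further edges.\<close>

lemma graph_edges_eq: "graph_edges E = (\<lambda>v. {v, parent v}) ` (UNIV - {r})"
proof -
  let ?f = "\<lambda>v. {v, parent v}"
  have sub: "?f ` (UNIV - {r}) \<subseteq> graph_edges E"
    proof
    fix x assume "x \<in> ?f ` (UNIV - {r})"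
    then obtain v where v: "v \<noteq> r" "x = {v, parent v}" by auto
    hence "x = {parent v, v} \<and> E (parent v) v" using parent[OF v(1)] by auto
    thus "x \<in> graph_edges E" unfolding graph_edges_def by blast
  qed
  have inj: "inj_on ?f (UNIV - {r})"
  proof (rule inj_onI)
    fix v w assume v: "v \<in> UNIV - {r}" and w: "w \<in> UNIV - {r}" and eq: "{v, parent v} = {w, parent w}"
    show "v = w"
    proof (rule ccontr)
      assume "v \<noteq> w"
      hence "v = parent w" "w = parent v" using eq by (auto simp: doubleton_eq_iff)
      thus False using parent[of v] parent[of w] v w by auto
    qed
  qed
  have fin: "finite (graph_edges E)"
    by (rule finite_subset[of _ "Pow UNIV"]) auto
  have "card (?f ` (UNIV - {r})) = CARD('n) - 1"
    using card_image[OF inj] by simp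
  thus ?thesis using card_subset_eq[OF fin sub] card_graph_edges by simp
qed

lemma edge_cases: "E u w \<Longrightarrow> (w \<noteq> r \<and> u = parent w) \<or> (u \<noteq> r \<and> w = parent u)"
proof -
  assume e: "E u w"
  hence "{u, w} \<in> graph_edges E" unfolding graph_edges_def by auto
  then obtain v where "v \<noteq> r" "{u, w} = {v, parent v}" using graph_edges_eq by auto
  thus ?thesis using e edge_irrefl by (auto simp: doubleton_eq_iff)
qed

lemma parent_unique: "E u v \<Longrightarrow> depth u + 1 = depth v \<Longrightarrow> u = parent v"
  using edge_cases parent by fastforce


lemma depth_parent: "v \<noteq> r \<Longrightarrow> depth (parent v) + 1 = depth v" using parent by blast
lemma edge_parent: "v \<noteq> r \<Longrightarrow> E (parent v) v" using parent by blast
lemma depth_eq_0_iff: "depth v = 0 \<longleftrightarrow> v = r" using tdist_eq_0_iff by auto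
lemma depth_root [simp]: "depth r = 0" using depth_eq_0_iff by auto

lemma children_eq_parent: "children E r z = {y. y \<noteq> r \<and> parent y = z}"
proof -
  have "E z y \<and> depth y = depth z + 1 \<longleftrightarrow> y \<noteq> r \<and> parent y = z" for y
  proof
    assume a: "E z y \<and> depth y = depth z + 1"
    hence "y \<noteq> r" using depth_eq_0_iff[of y] by auto
    thus "y \<noteq> r \<and> parent y = z" using a parent_unique[of z y] by auto
  next
    assume "y \<noteq> r \<and> parent y = z" thus "E z y \<and> depth y = depth z + 1" using parent by auto
  qed
  thus ?thesis unfolding children_def by auto
qed

lemma neighbours_eq: "{w. E v w} = (if v = r then {} else {parent v}) \<union> {w. w \<noteq> r \<and> parent w = v}"
proof -
  have "E v w \<longleftrightarrow> (v \<noteq> r \<and> w = parent v) \<or> (w \<noteq> r \<and> parent w = v)" for w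
  proof
    assume "E v w" thus "(v \<noteq> r \<and> w = parent v) \<or> (w \<noteq> r \<and> parent w = v)"
      using edge_cases[of v w] by auto
  next
    assume "(v \<noteq> r \<and> w = parent v) \<or> (w \<noteq> r \<and> parent w = v)"
    thus "E v w" using edge_parent[of v] edge_parent[of w] edge_sym[of "parent v" v] by auto
  qed
  thus ?thesis by auto
qed

lemma deepest_vertex_leaf:
  assumes mx: "\<forall>w. depth w \<le> depth v" and vr: "v \<noteq> r"
  shows "v \<in> leaves E r"
proof -
  have e: "{w. w \<noteq> r \<and> parent w = v} = {}"
  proof (rule ccontr)
    assume "{w. w \<noteq> r \<and> parent w = v} \<noteq> {}"
    then obtain w where "w \<noteq> r" "parent w = v" by auto
    thus False using mx depth_parent[of w] by (metis add_le_same_cancel1 not_one_le_zero)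
  qed
  have "{w. E v w} = {parent v}" by (simp only: neighbours_eq[of v] e if_not_P[OF vr] Un_empty_right)
  thus ?thesis unfolding leaves_def degree_def using vr by simp
qed

end

section \<open>Lush hedges of height two\<close>

locale lush_hedge_height_2 =
  fixes E :: "'n::finite \<Rightarrow> 'n \<Rightarrow> bool" and r :: 'n
  assumes is_lush: "lush E r" and height_2: "hedge_height E r = 2"
begin

sublocale rooted_tree
  using is_lush unfolding lush_def is_hedge_def by unfold_locales auto

lemma vheight_root: "vheight E r r = 2" using height_2 unfolding hedge_height_def .

lemma card_root_children: "card {y. y \<noteq> r \<and> parent y = r} \<ge> 3"
proof -
  have "\<forall>v. vheight E r v \<ge> 2 \<longrightarrow> card (children E r v) \<ge> 3" using is_lush unfolding lush_def by blast
  hence "card (children E r r) \<ge> 3" using vheight_root by simp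
  thus ?thesis using children_eq_parent[of r] by simp
qed

lemma depth_leaf: "l \<in> leaves E r \<Longrightarrow> depth l = 2"
proof -
  assume l: "l \<in> leaves E r"
  define D where "D = Max (range depth)"
  have "D \<in> range depth" unfolding D_def by (rule Max_in) auto
  then obtain v where v: "depth v = D" by auto
  have mx: "\<forall>w. depth w \<le> depth v" using v unfolding D_def by auto
  obtain y where y: "y \<noteq> r" "parent y = r" using card_root_children
    by (metis (mono_tags, lifting) Collect_empty_eq card.empty not_numeral_le_zero)
  have "depth y = 1" using depth_parent[OF y(1)] y(2) depth_eq_0_iff by simp
  hence "v \<noteq> r" using mx depth_eq_0_iff[of v] by (metis le_zero_eq one_neq_zero)
  hence vl: "v \<in> leaves E r" using deepest_vertex_leaf mx by blast
  have "\<exists>k. \<exists>l\<in>leaves E r. tdist E r l = k" using vl by blast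
  hence "\<exists>l\<in>leaves E r. tdist E r l = vheight E r r"
    unfolding vheight_def by (rule LeastI_ex)
  then obtain l0 where "l0 \<in> leaves E r" "depth l0 = 2" using vheight_root by auto
  thus ?thesis using is_lush l unfolding lush_def is_hedge_def by metis
qed

lemma depth_le_2: "depth v \<le> 2"
proof -
  define D where "D = Max (range depth)"
  have "D \<in> range depth" unfolding D_def by (rule Max_in) auto
  then obtain w where w: "depth w = D" by auto
  have mx: "\<forall>u. depth u \<le> depth w" using w unfolding D_def by auto
  obtain y where y: "y \<noteq> r" "parent y = r" using card_root_children
    by (metis (mono_tags, lifting) Collect_empty_eq card.empty not_numeral_le_zero)
  have "depth y = 1" using depth_parent[OF y(1)] y(2) depth_eq_0_iff by simp
  hence "w \<noteq> r" using mx depth_eq_0_iff[of w] by (metis le_zero_eq one_neq_zero)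
  hence "w \<in> leaves E r" using deepest_vertex_leaf mx by blast
  thus ?thesis using depth_leaf mx by metis
qed

lemma leaves_eq_depth_2: "leaves E r = {v. depth v = 2}"
proof -
  have "depth v = 2 \<Longrightarrow> v \<in> leaves E r" for v
    using deepest_vertex_leaf[of v] depth_le_2 depth_eq_0_iff[of v] by force
  thus ?thesis using depth_leaf by auto
qed

lemma vheight_depth_2: "depth v = 2 \<Longrightarrow> vheight E r v = 0"
  unfolding vheight_def using leaves_eq_depth_2 tdist_eq_0_iff
  by (intro Least_eq_0) auto

lemma vheight_depth_1: assumes dv: "depth v = 1" shows "vheight E r v = 1"
proof -
  have vr: "v \<noteq> r" using dv depth_eq_0_iff by auto
  have nl: "v \<notin> leaves E r" using dv leaves_eq_depth_2 by auto
  hence "card {w. E v w} \<noteq> 1" using vr unfolding leaves_def degree_def by auto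
  have "{w. w \<noteq> r \<and> parent w = v} \<noteq> {}"
  proof
    assume e: "{w. w \<noteq> r \<and> parent w = v} = {}"
    have "{w. E v w} = {parent v}" by (simp only: neighbours_eq[of v] e if_not_P[OF vr] Un_empty_right)
    thus False using \<open>card {w. E v w} \<noteq> 1\<close> by simp
  qed
  then obtain w where w: "w \<noteq> r" "parent w = v" by auto
  have "depth w = 2" using depth_parent[OF w(1)] w(2) dv by simp
  hence wl: "w \<in> leaves E r" using leaves_eq_depth_2 by auto
  have "tdist E v w = 1" using tdist_edge edge_parent[OF w(1)] w(2) by simp
  show ?thesis unfolding vheight_def
  proof (rule Least_equality)
    show "\<exists>l\<in>leaves E r. tdist E v l = 1" using wl \<open>tdist E v w = 1\<close> by blast
  next
    fix k assume "\<exists>l\<in>leaves E r. tdist E v l = k"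
    then obtain l where "l \<in> leaves E r" "tdist E v l = k" by blast
    thus "1 \<le> k" using nl tdist_eq_0_iff[of v l] by (cases k) auto
  qed
qed

lemma vheight_eq: "vheight E r v = 2 - depth v"
proof -
  have "depth v = 0 \<or> depth v = 1 \<or> depth v = 2" using depth_le_2[of v] by arith
  thus ?thesis using vheight_root vheight_depth_1 vheight_depth_2 depth_eq_0_iff by fastforce
qed

lemma depth_cases: "depth v = 0 \<or> depth v = 1 \<or> depth v = 2" using depth_le_2[of v] by arith

lemma depth_parent_of_leaf: "depth l = 2 \<Longrightarrow> depth (parent l) = 1"
  using depth_parent[of l] depth_eq_0_iff[of l] by auto
lemma parent_depth_1: "depth v = 1 \<Longrightarrow> parent v = r"
  using depth_parent[of v] depth_eq_0_iff[of v] depth_eq_0_iff[of "parent v"] by auto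

lemma edge_iff_depth: "i \<noteq> j \<Longrightarrow> E i j \<longleftrightarrow> (i = r \<and> depth j = 1) \<or> (j = r \<and> depth i = 1)
   \<or> (depth i = 2 \<and> j = parent i) \<or> (depth j = 2 \<and> i = parent j)"
proof
  assume "E i j"
  hence "(j \<noteq> r \<and> i = parent j) \<or> (i \<noteq> r \<and> j = parent i)" by (rule edge_cases)
  thus "(i = r \<and> depth j = 1) \<or> (j = r \<and> depth i = 1) \<or> (depth i = 2 \<and> j = parent i) \<or> (depth j = 2 \<and> i = parent j)"
    using depth_cases[of i] depth_cases[of j] depth_eq_0_iff[of i] depth_eq_0_iff[of j] parent_depth_1[of i] parent_depth_1[of j] by auto
next
  assume "(i = r \<and> depth j = 1) \<or> (j = r \<and> depth i = 1) \<or> (depth i = 2 \<and> j = parent i) \<or> (depth j = 2 \<and> i = parent j)"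
  thus "E i j" using edge_parent[of i] edge_parent[of j] edge_sym[of "parent i" i] parent_depth_1[of i] parent_depth_1[of j] depth_eq_0_iff[of i] depth_eq_0_iff[of j]
    by (metis zero_neq_numeral zero_neq_one)
qed

lemma children_depth_1: "depth v = 1 \<Longrightarrow> children E r v = {l. depth l = 2 \<and> parent l = v}"
  unfolding children_eq_parent using depth_parent depth_eq_0_iff by force

lemma level_set_eq: "level_set E r i = {v. 2 - depth v = i}"
  unfolding level_set_def vheight_eq ..

lemma level_set_0: "level_set E r 0 = {v. depth v = 2}"
proof -
  have "2 - depth v = 0 \<longleftrightarrow> depth v = 2" for v using depth_le_2[of v] by arith
  thus ?thesis unfolding level_set_eq by simp
qed
lemma level_set_1: "level_set E r 1 = {v. depth v = 1}"
proof -
  have "2 - depth v = 1 \<longleftrightarrow> depth v = 1" for v using depth_le_2[of v] by arith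
  thus ?thesis unfolding level_set_eq by simp
qed
lemma level_set_2: "level_set E r 2 = {r}" unfolding level_set_eq using depth_le_2 depth_eq_0_iff by force
lemma level_set_3: "level_set E r 3 = {}" unfolding level_set_eq by force

lemma ell_1: "ell E r 1 = int (card {v. depth v = 2}) - int (card {v. depth v = 1})"
  unfolding ell_def using level_set_0 level_set_1 by simp
lemma ell_2: "ell E r 2 = int (card {v. depth v = 1}) - 1"
  unfolding ell_def using level_set_1 level_set_2 by simp
lemma ell_3: "ell E r 3 = 1"
  unfolding ell_def by (simp add: level_set_2 level_set_3)

lemma card_depth_1: "card {v. depth v = 1} \<ge> 3"
proof -
  have "{y. y \<noteq> r \<and> parent y = r} = {v. depth v = 1}"
    using parent_depth_1 depth_parent depth_eq_0_iff depth_cases by fastforce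
  thus ?thesis using card_root_children by simp
qed

lemma card_children_depth_1: "depth v = 1 \<Longrightarrow> card {l. depth l = 2 \<and> parent l = v} \<ge> 2"
proof -
  assume d: "depth v = 1"
  have "\<forall>v. vheight E r v = 1 \<longrightarrow> card (children E r v) \<ge> 2" using is_lush unfolding lush_def by blast
  hence "card (children E r v) \<ge> 2" using vheight_depth_1[OF d] by blast
  thus ?thesis using children_depth_1[OF d] by simp
qed


definition height_one :: "'n set" where "height_one = {v. depth v = 1}"

lemma lush_depth_two_tree: "lush_depth_two_tree E r height_one parent"
proof -
  interpret T: depth_two_tree E r height_one parent
  proof
    fix l assume "l \<notin> height_one" "l \<noteq> r"
    thus "parent l \<in> height_one"
      using depth_cases[of l] depth_eq_0_iff[of l] depth_parent_of_leaf by (auto simp: height_one_def)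
  next
    fix i j :: 'n assume "i \<noteq> j"
    have "depth x = 2 \<longleftrightarrow> x \<notin> height_one \<and> x \<noteq> r" for x
      using depth_cases[of x] depth_eq_0_iff[of x] by (auto simp: height_one_def)
    thus "E i j \<longleftrightarrow> (i = r \<and> j \<in> height_one) \<or> (j = r \<and> i \<in> height_one)
        \<or> (i \<notin> height_one \<and> i \<noteq> r \<and> j = parent i)
        \<or> (j \<notin> height_one \<and> j \<noteq> r \<and> i = parent j)"
      using edge_iff_depth[OF \<open>i \<noteq> j\<close>] by (auto simp: height_one_def)
  qed (simp add: height_one_def)
  have "T.L = {l. depth l = 2}"
    unfolding T.L_def using depth_cases depth_eq_0_iff by (fastforce simp: height_one_def)
  hence "v \<in> height_one \<Longrightarrow> card (T.ch v) \<ge> 2" for v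
    unfolding T.ch_def using card_children_depth_1 by (simp add: height_one_def)
  thus ?thesis using card_depth_1 by unfold_locales (auto simp: height_one_def)
qed

sublocale T: lush_depth_two_tree E r height_one parent
  by (rule lush_depth_two_tree)

lemma T_L_eq_depth_2: "T.L = {l. depth l = 2}"
  unfolding T.L_def using depth_cases depth_eq_0_iff by (fastforce simp: height_one_def)

lemma multiplicities_eq:
  "{# ell E r 1 + ell E r 3, ell E r 2, ell E r 2, 1, 1 #}
     = image_mset int {# card T.L + 1 - card height_one, card height_one - 1, card height_one - 1, 1, 1 #}"
proof -
  have "card T.L \<ge> card height_one" using T.card_L_ge by simp
  moreover have "card {v. depth v = 2} = card T.L" by (simp only: T_L_eq_depth_2)
  moreover have "card {v. depth v = 1} = card height_one" by (simp only: height_one_def)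
  ultimately have "ell E r 1 + ell E r 3 = int (card T.L + 1 - card height_one)"
    unfolding ell_1 ell_3 by simp
  moreover have "ell E r 2 = int (card height_one - 1)"
    unfolding ell_2 using T.three_branches by (simp add: height_one_def)
  ultimately show ?thesis by simp
qed

lemma realisable:
  "\<exists>A \<in> S_T E. image_mset int (mult_list A) = {# ell E r 1 + ell E r 3, ell E r 2, ell E r 2, 1, 1 #}"
  using T.balanced_matrix_in_S_T unfolding multiplicities_eq T.mult_list_balanced_matrix_lush[symmetric]
  by blast

lemma not_01_realisable:
  assumes "vheight E r u = 1" "vheight E r w = 1" "card (children E r u) \<noteq> card (children E r w)"
  shows "\<not> (\<exists>A \<in> S_T E. (\<forall>i j. i \<noteq> j \<longrightarrow> A $ i $ j \<in> {0, 1}) \<and>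
           image_mset int (mult_list A) = {# ell E r 1 + ell E r 3, ell E r 2, ell E r 2, 1, 1 #})"
proof
  have "depth u = 1" "depth w = 1"
    using assms(1,2) vheight_eq[of u] vheight_eq[of w] depth_le_2[of u] depth_le_2[of w] by arith+
  moreover have "T.ch v = {l. depth l = 2 \<and> parent l = v}" for v
    unfolding T.ch_def T_L_eq_depth_2 by auto
  ultimately have "u \<in> height_one" "w \<in> height_one" "card (T.ch u) \<noteq> card (T.ch w)"
    using assms(3) by (simp_all only: height_one_def mem_Collect_eq children_depth_1 simp_thms)
  have int_inj: "image_mset int M = image_mset int M' \<Longrightarrow> M = M'" for M M'
    using multiset.inj_map[OF inj_of_nat] by (auto dest: injD)
  assume "\<exists>A \<in> S_T E. (\<forall>i j. i \<noteq> j \<longrightarrow> A $ i $ j \<in> {0, 1}) \<and>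
      image_mset int (mult_list A) = {# ell E r 1 + ell E r 3, ell E r 2, ell E r 2, 1, 1 #}"
  then obtain A where "A \<in> S_T E" "\<And>i j. i \<noteq> j \<Longrightarrow> A $ i $ j \<in> {0, 1}"
    "mult_list A = {# card T.L + 1 - card height_one, card height_one - 1, card height_one - 1, 1, 1 #}"
    unfolding multiplicities_eq by (blast dest: int_inj)
  thus False using T.no_01_realisation \<open>u \<in> height_one\<close> \<open>w \<in> height_one\<close>
    \<open>card (T.ch u) \<noteq> card (T.ch w)\<close> by blast
qed

end

theorem mainTheorem19:
  fixes E :: "'n::finite \<Rightarrow> 'n \<Rightarrow> bool" and r :: 'n
  assumes "lush E r"
    and "hedge_height E r = 2"
    and "\<exists>u v. vheight E r u = 1 \<and> vheight E r v = 1 \<and>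
               card (children E r u) \<noteq> card (children E r v)"
  shows "(\<exists>A \<in> S_T E. image_mset int (mult_list A) =
            {# ell E r 1 + ell E r 3, ell E r 2, ell E r 2, 1, 1 #})
       \<and> \<not> (\<exists>A \<in> S_T E. (\<forall>i j. i \<noteq> j \<longrightarrow> A $ i $ j \<in> {0, 1}) \<and>
            image_mset int (mult_list A) =
            {# ell E r 1 + ell E r 3, ell E r 2, ell E r 2, 1, 1 #})"
proof -
  interpret lush_hedge_height_2 E r using assms(1,2) by unfold_locales
  obtain u w where "vheight E r u = 1" "vheight E r w = 1" "card (children E r u) \<noteq> card (children E r w)"
    using assms(3) by blast
  with realisable not_01_realisable show ?thesis by blast
qed

end
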